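(* Let $\Gamma$ be any group and let $\rho_1,\rho_2\colon \Gamma\to \mathrm{PSL}(2,\mathbb{R})$ be homomorphisms. Suppose that $\rho_1$ is non-elementary and non-discrete, and that $\mathrm{rot}(\rho_1(\gamma))=\mathrm{rot}(\rho_2(\gamma))$ for every $\gamma\in\Gamma$. Then for every $\gamma\in\Gamma$, $$|\mathrm{tr}\,\rho_1(\gamma)|=|\mathrm{tr}\,\rho_2(\gamma)|.$$
   Context: $\mathrm{PSL}(2,\mathbb{R})$ is identified with the group of orientation-preserving isometries of the hyperbolic plane $\mathbb{H}^2$, and hence acts by orientation-preserving homeomorphisms on the circle at infinity $\partial_\infty\mathbb{H}^2\cong S^1$. For $A\in\mathrm{PSL}(2,\mathbb{R})$, $\mathrm{rot}(A)\in\mathbb{R}/2\pi\mathbb{Z}$ denotes the (Poincaré) rotation number of this circle homeomorphism. Concretely, $\mathrm{rot}(A)=0$ if $A$ is hyperbolic, parabolic or the identity, and $\mathrm{rot}(A)$ is the angle of rotation of $A$ if $A$ is elliptic; e.g. $\pm\begin{pmatrix}\cos\theta&\sin\theta\\-\sin\theta&\cos\theta\end{pmatrix}$ is a rotation of angle $2\theta$ of $\mathbb{H}^2$. For $A=\pm M\in\mathrm{PSL}(2,\mathbb{R})$ with $M\in\mathrm{SL}(2,\mathbb{R})$, $|\mathrm{tr}\,A|:=|\mathrm{tr}\,M|$, which is well defined. A representation $\rho$ is called elementary if $\rho(\Gamma)$ has a finite orbit in $\mathbb{H}^2\cup\partial_\infty\mathbb{H}^2$, and non-elementary otherwise. It is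 called non-discrete if $\rho(\Gamma)$ is not a discrete subgroup of $\mathrm{PSL}(2,\mathbb{R})$. *)

theory Defs
  imports "HOL-Analysis.Analysis" "HOL-Algebra.Group"
begin

text \<open>Elements of SL(2,R) are 2x2 real matrices of determinant 1; an element of
PSL(2,R) is represented by either of its two lifts M, -M.\<close>

definition SL2 :: "(real^2^2) set" where
  "SL2 = {M. det M = 1}"

definition psl_eq :: "real^2^2 \<Rightarrow> real^2^2 \<Rightarrow> bool" where
  "psl_eq A B \<longleftrightarrow> A = B \<or> A = - B"

definition psl_hom :: "('g, 'z) monoid_scheme \<Rightarrow> ('g \<Rightarrow> real^2^2) \<Rightarrow> bool" where
  "psl_hom G \<rho> \<longleftrightarrow> (\<forall>x\<in>carrier G. \<rho> x \<in> SL2) \<and>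
     (\<forall>x\<in>carrier G. \<forall>y\<in>carrier G. psl_eq (\<rho> (x \<otimes>\<^bsub>G\<^esub> y)) (\<rho> x ** \<rho> y))"

definition abs_tr :: "real^2^2 \<Rightarrow> real" where
  "abs_tr M = \<bar>M$1$1 + M$2$2\<bar>"

text \<open>Points of the closed hyperbolic plane in the upper half-plane model:
Some z with Im z > 0 (interior points of H^2), Some x with x real or None (= infinity)
(points of the circle at infinity).\<close>
definition closed_H2 :: "complex option set" where
  "closed_H2 = {None} \<union> Some ` {z. Im z \<ge> 0}"

definition mob :: "real^2^2 \<Rightarrow> complex option \<Rightarrow> complex option" where
  "mob M p = (let a = complex_of_real (M$1$1); b = complex_of_real (M$1$2);
                  c = complex_of_real (M$2$1); d = complex_of_real (M$2$2) in
     (case p of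
        None \<Rightarrow> (if c = 0 then None else Some (a / c))
      | Some z \<Rightarrow> (if c * z + d = 0 then None else Some ((a * z + b) / (c * z + d)))))"

definition elementary :: "('g, 'z) monoid_scheme \<Rightarrow> ('g \<Rightarrow> real^2^2) \<Rightarrow> bool" where
  "elementary G \<rho> \<longleftrightarrow> (\<exists>p\<in>closed_H2. finite ((\<lambda>g. mob (\<rho> g) p) ` carrier G))"

text \<open>Discreteness of rho(Gamma) in PSL(2,R): its full preimage in SL(2,R)
(a two-sheeted cover of PSL(2,R)) is a discrete subset.\<close>
definition psl_image :: "('g, 'z) monoid_scheme \<Rightarrow> ('g \<Rightarrow> real^2^2) \<Rightarrow> (real^2^2) set" where
  "psl_image G \<rho> = {A. \<exists>g\<in>carrier G. A = \<rho> g \<or> A = - \<rho> g}"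

definition discrete_set :: "(real^2^2) set \<Rightarrow> bool" where
  "discrete_set S \<longleftrightarrow> (\<forall>A\<in>S. \<exists>e>0. \<forall>B\<in>S. dist B A < e \<longrightarrow> B = A)"

definition discrete_rep :: "('g, 'z) monoid_scheme \<Rightarrow> ('g \<Rightarrow> real^2^2) \<Rightarrow> bool" where
  "discrete_rep G \<rho> \<longleftrightarrow> discrete_set (psl_image G \<rho>)"

text \<open>Rotation number, with values in R/2piZ represented by the angle in (-pi, pi].
For elliptic M (|tr M| < 2) it is the rotation angle of the isometry at its fixed point
z0 in H^2, i.e. the argument of the derivative 1/(c z0 + d)^2 of z \<mapsto> (az+b)/(cz+d) at z0;
otherwise (hyperbolic, parabolic, identity) it is 0.\<close>
definition fixpt :: "real^2^2 \<Rightarrow> complex" where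
  "fixpt M = (THE z. Im z > 0 \<and> mob M (Some z) = Some z)"

definition rot :: "real^2^2 \<Rightarrow> real" where
  "rot M = (if abs_tr M < 2
            then Arg (inverse ((complex_of_real (M$2$1) * fixpt M + complex_of_real (M$2$2))\<^sup>2))
            else 0)"

end

theory Submission
  imports Defs
begin

text \<open>
  Equal rotation numbers force equal \<open>|tr|\<close> on elliptic elements, because the rotation number
  of an elliptic element \<open>M\<close> determines \<open>(tr M)\<^sup>2\<close>.  Since \<open>\<rho>1\<close> is non-elementary and
  non-discrete, \<open>\<rho>1(\<Gamma>)\<close> contains elliptic elements \<open>B = \<rho>1(h)\<close> arbitrarily close to the
  identity: a non-trivial \<open>T\<close> near the identity is either elliptic, or one of \<open>T T'\<close>,
  \<open>T T'\<^sup>-\<^sup>1\<close>, \<open>[T, T']\<close> is, where \<open>T'\<close> is a conjugate of \<open>T\<close> by one of finitely many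
  elements of \<open>\<rho>1(\<Gamma>)\<close>.  Given \<open>\<gamma>\<close>, the traces \<open>u\<^sub>k\<close> and \<open>v\<^sub>k\<close> of suitable lifts of
  \<open>\<rho>1(\<gamma> h\<^sup>k)\<close> and \<open>\<rho>2(\<gamma> h\<^sup>k)\<close> both satisfy \<open>x\<^sub>k\<^sub>+\<^sub>2 = t x\<^sub>k\<^sub>+\<^sub>1 - x\<^sub>k\<close> with
  \<open>t = tr B\<close> close to \<open>2\<close>.  So \<open>u\<close> turns slowly and has three consecutive terms of absolute
  value below \<open>2\<close>, where \<open>u\<^sub>k\<^sup>2 = v\<^sub>k\<^sup>2\<close>; as \<open>u\<^sup>2 - v\<^sup>2\<close> satisfies a linear third-order
  recurrence that can be run backwards, \<open>u\<^sub>0\<^sup>2 = v\<^sub>0\<^sup>2\<close>.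
\<close>

lemma abs_less_two_iff: "\<bar>x :: real\<bar> < 2 \<longleftrightarrow> x\<^sup>2 < 4"
  using abs_le_square_iff[of 2 x] by auto

lemma power2_eq_iff_abs_eq: "x\<^sup>2 = y\<^sup>2 \<longleftrightarrow> \<bar>x\<bar> = \<bar>y :: 'a :: linordered_idom\<bar>"
  by (metis power2_abs power2_eq_iff_nonneg abs_ge_zero)

lemma matrix_mul_uminus_left: "(- A) ** B = - (A ** (B :: 'a::ring_1^'n^'m))"
  by (simp add: matrix_matrix_mult_def vec_eq_iff sum_negf)

lemma matrix_mul_uminus_right: "A ** (- B) = - ((A :: 'a::ring_1^'n^'m) ** B)"
  by (simp add: matrix_matrix_mult_def vec_eq_iff sum_negf)

lemma matrix_add_rdistrib: "(A + B) ** C = A ** C + (B :: 'a::semiring_1^'n^'m) ** C"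
  by (simp add: matrix_matrix_mult_def vec_eq_iff sum.distrib distrib_right)

lemma matrix_diff_ldistrib: "A ** (B - C) = A ** B - (A :: 'a::ring_1^'n^'m) ** C"
  by (simp add: matrix_matrix_mult_def vec_eq_iff sum_subtractf right_diff_distrib)

lemma matrix_diff_rdistrib: "(A - B) ** C = A ** C - (B :: 'a::ring_1^'n^'m) ** C"
  by (simp add: matrix_matrix_mult_def vec_eq_iff sum_subtractf left_diff_distrib)

definition mat2 :: "real \<Rightarrow> real \<Rightarrow> real \<Rightarrow> real \<Rightarrow> real^2^2" where
  "mat2 a b c d = (\<chi> i j. if i = 1 then (if j = 1 then a else b) else (if j = 1 then c else d))"

lemma mat2_nth [simp]:
  "mat2 a b c d $1$1 = a" "mat2 a b c d $1$2 = b" "mat2 a b c d $2$1 = c" "mat2 a b c d $2$2 = d"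
  by (simp_all add: mat2_def)

lemma mat2_entries: "M = mat2 (M$1$1) (M$1$2) (M$2$1) (M$2$2)"
  unfolding mat2_def vec_eq_iff forall_2 by auto

lemma mat2_cases:
  obtains a b c d where "M = mat2 a b c d"
  using mat2_entries by blast

lemma mat2_eq_iff [simp]: "mat2 a b c d = mat2 a' b' c' d' \<longleftrightarrow> a = a' \<and> b = b' \<and> c = c' \<and> d = d'"
  unfolding vec_eq_iff forall_2 by auto

lemma mat2_mult [simp]:
  "mat2 a b c d ** mat2 a' b' c' d' = mat2 (a*a' + b*c') (a*b' + b*d') (c*a' + d*c') (c*b' + d*d')"
  unfolding matrix_matrix_mult_def vec_eq_iff forall_2 sum_2 by simp

lemma mat2_uminus [simp]: "- mat2 a b c d = mat2 (- a) (- b) (- c) (- d)"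
  unfolding vec_eq_iff forall_2 by simp

lemma mat2_add [simp]: "mat2 a b c d + mat2 a' b' c' d' = mat2 (a + a') (b + b') (c + c') (d + d')"
  unfolding vec_eq_iff forall_2 by simp

lemma mat2_diff [simp]: "mat2 a b c d - mat2 a' b' c' d' = mat2 (a - a') (b - b') (c - c') (d - d')"
  unfolding vec_eq_iff forall_2 by simp

lemma mat2_scaleR [simp]: "x *\<^sub>R mat2 a b c d = mat2 (x * a) (x * b) (x * c) (x * d)"
  unfolding vec_eq_iff forall_2 by simp

lemma mat2_one: "mat 1 = mat2 1 0 0 1"
  unfolding vec_eq_iff forall_2 mat_def by simp

lemma det_mat2 [simp]: "det (mat2 a b c d) = a * d - b * c"
  by (simp add: det_2)

lemma trace_mat2 [simp]: "trace (mat2 a b c d) = a + d"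
  by (simp add: trace_def sum_2)

lemma trace_2: "trace (M :: real^2^2) = M$1$1 + M$2$2"
  by (simp add: trace_def sum_2)

lemma abs_tr_eq_abs_trace: "abs_tr M = \<bar>trace M\<bar>"
  by (simp add: abs_tr_def trace_2)

lemma matrix_mult_nth2: "((A :: real^2^2) ** (B :: real^2^2))$i$j = A$i$1 * B$1$j + A$i$2 * B$2$j"
  by (simp add: matrix_matrix_mult_def sum_2)

definition adjugate :: "real^2^2 \<Rightarrow> real^2^2" where
  "adjugate M = mat2 (M$2$2) (- M$1$2) (- M$2$1) (M$1$1)"

lemma adjugate_mat2 [simp]: "adjugate (mat2 a b c d) = mat2 d (- b) (- c) a"
  by (simp add: adjugate_def)

lemma matrix_mul_adjugate: "M ** adjugate M = det M *\<^sub>R mat 1"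
  by (cases M rule: mat2_cases) (simp add: mat2_one algebra_simps)

lemma adjugate_matrix_mul: "adjugate M ** M = det M *\<^sub>R mat 1"
  by (cases M rule: mat2_cases) (simp add: mat2_one algebra_simps)

lemma det_adjugate [simp]: "det (adjugate M) = det M"
  by (cases M rule: mat2_cases) (simp add: algebra_simps)

lemma adjugate_uminus: "adjugate (- M) = - adjugate M"
  by (cases M rule: mat2_cases) simp

lemma cayley_hamilton2: "M ** M = trace M *\<^sub>R M - det M *\<^sub>R (mat 1 :: real^2^2)"
  by (cases M rule: mat2_cases) (simp add: mat2_one algebra_simps)

lemma det_uminus2 [simp]: "det (- M :: real^2^2) = det M"
  by (cases M rule: mat2_cases) simp

lemma det_scaleR2: "det (x *\<^sub>R M :: real^2^2) = x\<^sup>2 * det M"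
  by (cases M rule: mat2_cases) (simp add: algebra_simps power2_eq_square)

lemma trace_uminus2 [simp]: "trace (- M :: real^2^2) = - trace M"
  by (cases M rule: mat2_cases) simp

lemma trace_scaleR2: "trace (x *\<^sub>R M :: real^2^2) = x * trace M"
  by (cases M rule: mat2_cases) (simp add: algebra_simps)

lemma trace_conj: "trace (S ** X ** adjugate S) = det S * trace X"
  by (cases S rule: mat2_cases, cases X rule: mat2_cases) (simp add: algebra_simps)

lemma det_conj: "det (S ** X ** adjugate S) = (det S)\<^sup>2 * det X"
  by (simp add: det_mul power2_eq_square)

lemma trace_mult_adjugate: "trace (A ** adjugate B) = trace A * trace B - trace (A ** B)"
  by (cases A rule: mat2_cases, cases B rule: mat2_cases) (simp add: algebra_simps)

lemma trace_commutator2: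
  "trace (A ** B ** adjugate A ** adjugate B) = det B * (trace A)\<^sup>2 + det A * (trace B)\<^sup>2
     + (trace (A ** B))\<^sup>2 - trace A * trace B * trace (A ** B) - 2 * det A * det B"
  by (cases A rule: mat2_cases, cases B rule: mat2_cases) (simp add: algebra_simps power2_eq_square)

lemma trace_commutator_of_equal_traces:
  assumes "det T = 1" "det T' = 1" "trace T' = trace T"
  shows "trace (T ** T' ** adjugate T ** adjugate T')
           = 2 - (trace (T ** T') - 2) * (trace (T ** adjugate T') - 2)"
  unfolding trace_commutator2 trace_mult_adjugate[of T T']
  using assms by (simp add: power2_eq_square algebra_simps)

lemma psl_eq_refl [simp]: "psl_eq A A"
  by (simp add: psl_eq_def)

lemma psl_eq_sym: "psl_eq A B \<Longrightarrow> psl_eq B A"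
  by (auto simp: psl_eq_def)

lemma psl_eq_trans: "psl_eq A B \<Longrightarrow> psl_eq B C \<Longrightarrow> psl_eq A C"
  by (auto simp: psl_eq_def)

lemma psl_eq_uminus_right [simp]: "psl_eq A (- B) \<longleftrightarrow> psl_eq A B"
  by (auto simp: psl_eq_def)

lemma psl_eq_mult_left: "psl_eq A B \<Longrightarrow> psl_eq (C ** A) (C ** B)"
  by (auto simp: psl_eq_def matrix_mul_uminus_right)

lemma psl_eq_mult_right: "psl_eq A B \<Longrightarrow> psl_eq (A ** C) (B ** C)"
  by (auto simp: psl_eq_def matrix_mul_uminus_left)

lemma psl_eq_mult: "psl_eq A A' \<Longrightarrow> psl_eq B B' \<Longrightarrow> psl_eq (A ** B) (A' ** B')"
  by (meson psl_eq_mult_left psl_eq_mult_right psl_eq_trans)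

lemma psl_eq_adjugate: "psl_eq A B \<Longrightarrow> psl_eq (adjugate A) (adjugate B)"
  by (auto simp: psl_eq_def adjugate_uminus)

lemma psl_eq_det: "psl_eq A B \<Longrightarrow> det A = det B"
  by (auto simp: psl_eq_def)

lemma psl_eq_abs_trace: "psl_eq A B \<Longrightarrow> \<bar>trace A\<bar> = \<bar>trace B\<bar>"
  by (auto simp: psl_eq_def)

lemma psl_eq_abs_tr: "psl_eq A B \<Longrightarrow> abs_tr A = abs_tr B"
  by (simp add: abs_tr_eq_abs_trace psl_eq_abs_trace)

lemma psl_eq_lift_trace:
  assumes "\<bar>trace X\<bar> = \<bar>t\<bar>"
  obtains Y where "psl_eq Y X" "trace Y = t"
proof (cases "trace X = t")
  case False
  then have "trace (- X) = t"
    using assms by (auto simp: abs_if split: if_splits)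
  then show thesis
    using that[of "- X"] by (simp add: psl_eq_def)
qed (use that[of X] in simp)

section \<open>Rotation numbers of elliptic elements\<close>

lemma elliptic_lower_left_nonzero:
  assumes "det M = 1" "abs_tr M < 2"
  shows "M$2$1 \<noteq> 0"
proof
  assume "M$2$1 = 0"
  then have "(trace M)\<^sup>2 = (M$1$1 - M$2$2)\<^sup>2 + 4"
    using assms(1) by (simp add: det_2 trace_2 power2_eq_square algebra_simps)
  moreover have "(trace M)\<^sup>2 < 4"
    using assms(2) by (simp add: abs_tr_eq_abs_trace abs_less_two_iff)
  ultimately show False
    using zero_le_power2[of "M$1$1 - M$2$2"] by linarith
qed

lemma mob_fixes_iff:
  assumes c: "M$2$1 \<noteq> 0" and y: "y > 0"
  defines "a \<equiv> M$1$1" and "b \<equiv> M$1$2" and "c \<equiv> M$2$1" and "d \<equiv> M$2$2"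
  shows "mob M (Some (Complex x y)) = Some (Complex x y) \<longleftrightarrow>
           2 * c * x = a - d \<and> c * (x\<^sup>2 - y\<^sup>2) + (d - a) * x = b"
proof -
  define z where "z = Complex x y"
  have den: "complex_of_real c * z + complex_of_real d = Complex (c * x + d) (c * y)"
    by (simp add: z_def complex_eq_iff)
  have nz: "complex_of_real c * z + complex_of_real d \<noteq> 0"
    using c y unfolding den by (simp add: complex_eq_iff c_def)
  have "mob M (Some z) = Some z \<longleftrightarrow>
      complex_of_real a * z + complex_of_real b = z * (complex_of_real c * z + complex_of_real d)"
    using nz by (simp add: mob_def Let_def a_def b_def c_def d_def divide_eq_eq)
  also have "\<dots> \<longleftrightarrow> a * x + b = c * (x\<^sup>2 - y\<^sup>2) + d * x \<and> a * y = 2 * c * x * y + d * y"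
    by (simp add: z_def complex_eq_iff power2_eq_square algebra_simps)
  also have "a * y = 2 * c * x * y + d * y \<longleftrightarrow> 2 * c * x = a - d"
    using y by (metis (no_types, opaque_lifting) add_diff_cancel_right' diff_add_cancel
        distrib_right less_irrefl mult.commute mult_cancel_right)
  finally show ?thesis
    unfolding z_def by argo
qed

lemma mob_fixes_elliptic_iff:
  assumes "det M = 1" "abs_tr M < 2" "y > 0"
  shows "mob M (Some (Complex x y)) = Some (Complex x y) \<longleftrightarrow>
           x = (M$1$1 - M$2$2) / (2 * M$2$1) \<and> (2 * M$2$1 * y)\<^sup>2 = 4 - (trace M)\<^sup>2"
proof -
  define a b c d where "a = M$1$1" "b = M$1$2" "c = M$2$1" "d = M$2$2"
  have c0: "c \<noteq> 0"
    using elliptic_lower_left_nonzero[OF assms(1,2)] by (simp add: a_b_c_d_def)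
  have "a * d - b * c = 1" "trace M = a + d"
    using assms(1) by (simp_all add: trace_2 a_b_c_d_def det_2)
  then have disc: "4 * c * (c * (x\<^sup>2 - y\<^sup>2) + (d - a) * x - b) = 4 - (trace M)\<^sup>2 - (2 * c * y)\<^sup>2"
    if "2 * c * x = a - d"
  proof -
    have "4 * c * (c * (x\<^sup>2 - y\<^sup>2) + (d - a) * x - b)
        = (2 * c * x)\<^sup>2 + 2 * (d - a) * (2 * c * x) - 4 * b * c - (2 * c * y)\<^sup>2"
      by (simp add: power2_eq_square algebra_simps)
    also have "\<dots> = 4 * (a * d - b * c) - (a + d)\<^sup>2 - (2 * c * y)\<^sup>2"
      unfolding that by (simp add: power2_eq_square algebra_simps)
    finally show ?thesis
      using \<open>a * d - b * c = 1\<close> \<open>trace M = a + d\<close> by simp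
  qed
  have "mob M (Some (Complex x y)) = Some (Complex x y) \<longleftrightarrow>
      2 * c * x = a - d \<and> c * (x\<^sup>2 - y\<^sup>2) + (d - a) * x - b = 0"
    using mob_fixes_iff[OF _ assms(3), of M x] c0 unfolding a_b_c_d_def by auto
  also have "\<dots> \<longleftrightarrow> 2 * c * x = a - d \<and> (2 * c * y)\<^sup>2 = 4 - (trace M)\<^sup>2"
    using disc c0 by auto
  also have "2 * c * x = a - d \<longleftrightarrow> x = (a - d) / (2 * c)"
    using c0 by (auto simp: field_simps)
  finally show ?thesis
    by (simp add: a_b_c_d_def)
qed

lemma fixpt_elliptic:
  assumes "det M = 1" "abs_tr M < 2"
  defines "c \<equiv> M$2$1" and "t \<equiv> trace M"
  defines "s \<equiv> sgn c * sqrt (4 - t\<^sup>2)"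
  shows "fixpt M = Complex ((M$1$1 - M$2$2) / (2 * c)) (s / (2 * c))"
proof -
  have c0: "c \<noteq> 0"
    using elliptic_lower_left_nonzero[OF assms(1,2)] by (simp add: c_def)
  have root_pos: "sqrt (4 - t\<^sup>2) > 0"
    using assms(2) by (simp add: t_def abs_tr_eq_abs_trace abs_less_two_iff)
  have pos_iff: "y > 0 \<and> (2 * c * y)\<^sup>2 = 4 - t\<^sup>2 \<longleftrightarrow> y = s / (2 * c)" for y
  proof -
    have "(2 * c * y)\<^sup>2 = 4 - t\<^sup>2 \<longleftrightarrow> \<bar>2 * c * y\<bar> = sqrt (4 - t\<^sup>2)"
      using power2_eq_iff_abs_eq[of "2 * c * y" "sqrt (4 - t\<^sup>2)"] root_pos by simp
    then have "y > 0 \<and> (2 * c * y)\<^sup>2 = 4 - t\<^sup>2 \<longleftrightarrow> y > 0 \<and> 2 * \<bar>c\<bar> * y = sqrt (4 - t\<^sup>2)"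
      by (auto simp: abs_mult)
    also have "\<dots> \<longleftrightarrow> 2 * \<bar>c\<bar> * y = sqrt (4 - t\<^sup>2)"
      using root_pos zero_less_mult_pos[of "2 * \<bar>c\<bar>" y] by fastforce
    also have "\<dots> \<longleftrightarrow> y = s / (2 * c)"
      using c0 by (cases "c > 0") (auto simp: s_def field_simps)
    finally show ?thesis .
  qed
  show ?thesis
    unfolding fixpt_def
  proof (rule the_equality)
    fix z
    assume "Im z > 0 \<and> mob M (Some z) = Some z"
    then show "z = Complex ((M$1$1 - M$2$2) / (2 * c)) (s / (2 * c))"
      using mob_fixes_elliptic_iff[OF assms(1,2), of "Im z" "Re z"] pos_iff[of "Im z"]
      by (simp add: complex_eq_iff c_def t_def)
  qed (use mob_fixes_elliptic_iff[OF assms(1,2)] pos_iff in \<open>auto simp: c_def t_def\<close>)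
qed

lemma rot_elliptic:
  assumes "det M = 1" "abs_tr M < 2"
  obtains w where "cmod w = 1" "Re w = (trace M)\<^sup>2 / 2 - 1" "rot M = Arg w"
proof -
  define c t where "c = M$2$1" "t = trace M"
  define s where "s = sgn c * sqrt (4 - t\<^sup>2)"
  have c0: "c \<noteq> 0"
    using elliptic_lower_left_nonzero[OF assms] by (simp add: c_t_def)
  have "t\<^sup>2 < 4"
    using assms(2) by (simp add: c_t_def abs_tr_eq_abs_trace abs_less_two_iff)
  then have s2: "s\<^sup>2 = 4 - t\<^sup>2"
    using c0 by (simp add: s_def power_mult_distrib sgn_if)
  \<comment> \<open>\<open>\<kappa> = c z\<^sub>0 + d\<close> at the fixed point \<open>z\<^sub>0\<close> is the eigenvalue \<open>(t + i s) / 2\<close> of \<open>M\<close>\<close>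
  define \<kappa> where "\<kappa> = complex_of_real c * fixpt M + complex_of_real (M$2$2)"
  have \<kappa>: "\<kappa> = Complex (t / 2) (s / 2)"
    using c0 unfolding \<kappa>_def fixpt_elliptic[OF assms] c_t_def s_def
    by (simp add: complex_eq_iff trace_2 field_simps)
  have \<kappa>2: "\<kappa>\<^sup>2 = Complex (t\<^sup>2 / 2 - 1) (t * s / 2)"
    using s2 unfolding \<kappa> by (simp add: complex_eq_iff power2_eq_square field_simps)
  have "(t * s / 2)\<^sup>2 = t\<^sup>2 * (4 - t\<^sup>2) / 4"
    using s2 by (simp add: power_mult_distrib power_divide)
  then have unit: "(t\<^sup>2 / 2 - 1)\<^sup>2 + (t * s / 2)\<^sup>2 = 1"
    by (simp add: power2_eq_square field_simps)
  define w where "w = Complex (t\<^sup>2 / 2 - 1) (- (t * s / 2))"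
  show thesis
  proof
    show "cmod w = 1"
      using unit by (simp add: w_def cmod_def)
    show "Re w = (trace M)\<^sup>2 / 2 - 1"
      by (simp add: w_def c_t_def)
    have "inverse (\<kappa>\<^sup>2) = w"
      unfolding \<kappa>2 w_def by (simp add: complex_eq_iff unit)
    then show "rot M = Arg w"
      using assms(2) by (simp add: rot_def \<kappa>_def c_t_def)
  qed
qed

lemma unit_complex_eq_if_Arg_eq:
  assumes "cmod w = 1" "cmod w' = 1" "Arg w = Arg w'"
  shows "w = w'"
  using Arg_eq[of w] Arg_eq[of w'] assms by fastforce

lemma rot_neq_0_iff_elliptic:
  assumes "det M = 1"
  shows "rot M \<noteq> 0 \<longleftrightarrow> abs_tr M < 2"
proof
  assume ell: "abs_tr M < 2"
  then obtain w where w: "cmod w = 1" "Re w = (trace M)\<^sup>2 / 2 - 1" "rot M = Arg w"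
    using rot_elliptic[OF assms] by blast
  have "(trace M)\<^sup>2 < 4"
    using ell by (simp add: abs_tr_eq_abs_trace abs_less_two_iff)
  then have "w \<noteq> 1"
    using w(2) by auto
  then show "rot M \<noteq> 0"
    using unit_complex_eq_if_Arg_eq[of w 1] w by auto
qed (auto simp: rot_def split: if_splits)

lemma abs_tr_eq_if_rot_eq:
  assumes "det A = 1" "det B = 1" "rot A = rot B" "abs_tr A < 2"
  shows "abs_tr B = abs_tr A"
proof -
  have "abs_tr B < 2"
    using assms rot_neq_0_iff_elliptic by metis
  obtain v where v: "cmod v = 1" "Re v = (trace A)\<^sup>2 / 2 - 1" "rot A = Arg v"
    using rot_elliptic[OF assms(1,4)] by blast
  obtain w where w: "cmod w = 1" "Re w = (trace B)\<^sup>2 / 2 - 1" "rot B = Arg w"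
    using rot_elliptic[OF assms(2) \<open>abs_tr B < 2\<close>] by blast
  have "v = w"
    using unit_complex_eq_if_Arg_eq[of v w] v w assms(3) by simp
  then have "(trace B)\<^sup>2 = (trace A)\<^sup>2"
    using v(2) w(2) by simp
  then show ?thesis
    by (simp add: abs_tr_eq_abs_trace power2_eq_iff_abs_eq)
qed

section \<open>A second-order trace recurrence\<close>

lemma trace_recurrence_invariant:
  fixes u :: "nat \<Rightarrow> real"
  assumes rec: "\<And>k. u (Suc (Suc k)) = t * u (Suc k) - u k"
  shows "(u k)\<^sup>2 + (u (Suc k))\<^sup>2 - t * u k * u (Suc k) = (u 0)\<^sup>2 + (u 1)\<^sup>2 - t * u 0 * u 1"
proof (induction k)
  case (Suc k)
  have "(u (Suc k))\<^sup>2 + (u (Suc (Suc k)))\<^sup>2 - t * u (Suc k) * u (Suc (Suc k))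
      = (u k)\<^sup>2 + (u (Suc k))\<^sup>2 - t * u k * u (Suc k)"
    unfolding rec by (simp add: power2_eq_square algebra_simps)
  then show ?case
    using Suc by simp
qed simp

lemma trace_recurrence_squares:
  fixes u :: "nat \<Rightarrow> real"
  assumes rec: "\<And>k. u (Suc (Suc k)) = t * u (Suc k) - u k"
  shows "(u n)\<^sup>2 = (u (n + 3))\<^sup>2 - (t\<^sup>2 - 1) * ((u (n + 2))\<^sup>2 - (u (n + 1))\<^sup>2)"
proof -
  have u2: "u (n + 2) = t * u (n + 1) - u n" and u3: "u (n + 3) = t * u (n + 2) - u (n + 1)"
    using rec[of n] rec[of "n + 1"] by (simp_all add: numeral_eq_Suc)
  show ?thesis
    unfolding u3 unfolding u2 by (simp add: power2_eq_square algebra_simps)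
qed

lemma third_order_recurrence_zero:
  fixes w :: "nat \<Rightarrow> real"
  assumes rec: "\<And>n. w n = w (n + 3) - c * (w (n + 2) - w (n + 1))"
    and zero: "w p = 0" "w (p + 1) = 0" "w (p + 2) = 0"
    and "n \<le> p"
  shows "w n = 0"
proof -
  have "w n = 0 \<and> w (n + 1) = 0 \<and> w (n + 2) = 0"
    using \<open>n \<le> p\<close>
  proof (induction rule: inc_induct)
    case (step m)
    then show ?case
      using rec[of m] by (simp add: numeral_eq_Suc)
  qed (use zero in simp)
  then show ?thesis by simp
qed

lemma concave_sequence_eventually_negative:
  fixes u :: "nat \<Rightarrow> real"
  assumes concave: "\<And>k. u (Suc (Suc k)) - u (Suc k) \<le> u (Suc k) - u k" and "u (Suc K) < u K"
  shows "\<exists>j. u j < 0"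
proof -
  define d where "d = u (Suc K) - u K"
  have diff_le: "u (Suc (K + j)) - u (K + j) \<le> d" for j
  proof (induction j)
    case (Suc j)
    then show ?case
      using concave[of "K + j"] by simp
  qed (simp add: d_def)
  have u_le: "u (K + j) \<le> u K + real j * d" for j
  proof (induction j)
    case (Suc j)
    then show ?case
      using diff_le[of j] by (simp add: algebra_simps)
  qed simp
  obtain j :: nat where "real j > u K / (- d)"
    using reals_Archimedean2 by blast
  then have "u K + real j * d < 0"
    using \<open>u (Suc K) < u K\<close> by (simp add: d_def field_simps)
  then show ?thesis
    using u_le[of j] by (intro exI[of _ "K + j"]) linarith
qed

lemma trace_recurrence_sign_change:
  fixes u :: "nat \<Rightarrow> real"
  assumes rec: "\<And>k. u (Suc (Suc k)) = t * u (Suc k) - u k" and "t < 2" and "u 0 > 0"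
  shows "\<exists>m. u m \<le> 0"
proof (rule ccontr)
  assume "\<not> ?thesis"
  then have pos: "u k > 0" for k
    by (simp add: not_le)
  have second_diff: "(u (Suc (Suc k)) - u (Suc k)) - (u (Suc k) - u k) = (t - 2) * u (Suc k)" for k
    by (simp add: rec algebra_simps)
  have neg: "(t - 2) * u (Suc k) < 0" for k
    using pos[of "Suc k"] \<open>t < 2\<close> by (simp add: mult_neg_pos)
  then have mono: "u K \<le> u (Suc K)" for K
    using concave_sequence_eventually_negative[of u K] second_diff pos
    by (metis diff_ge_0_iff_ge less_eq_real_def not_less)
  then have second_diff_mono: "(t - 2) * u (Suc (Suc k)) \<le> (t - 2) * u (Suc k)" for k
    using \<open>t < 2\<close> by (simp add: mult_left_mono_neg)
  have "\<exists>j. u (Suc j) - u j < 0"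
  proof (rule concave_sequence_eventually_negative[of "\<lambda>k. u (Suc k) - u k" 0])
    show "(u (Suc (Suc (Suc k))) - u (Suc (Suc k))) - (u (Suc (Suc k)) - u (Suc k))
        \<le> (u (Suc (Suc k)) - u (Suc k)) - (u (Suc k) - u k)" for k
      using second_diff_mono[of k] second_diff[of k] second_diff[of "Suc k"] by linarith
    show "u (Suc (Suc 0)) - u (Suc 0) < u (Suc 0) - u 0"
      using second_diff[of 0] neg[of 0] by linarith
  qed
  then show False
    using mono by (metis diff_less_0_iff_less not_less)
qed

lemma small_invariant_small_step:
  fixes x y t :: real
  assumes "x\<^sup>2 + y\<^sup>2 - t * x * y < 1/100" "0 \<le> 2 - t" "2 - t < 1/100" "\<bar>x\<bar> \<le> 2"
  shows "\<bar>y - x\<bar> < 1/2"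
proof (rule ccontr)
  define D where "D = y - x"
  assume "\<not> ?thesis"
  then have D2: "\<bar>D\<bar> \<ge> 1/2"
    unfolding D_def by simp
  have "x\<^sup>2 + y\<^sup>2 - t * x * y = D\<^sup>2 + (2 - t) * x\<^sup>2 + (2 - t) * (x * D)"
    unfolding D_def by (simp add: power2_eq_square algebra_simps)
  moreover have "(2 - t) * x\<^sup>2 \<ge> 0"
    using assms(2) by simp
  moreover have "(2 - t) * (x * D) \<ge> - ((2 - t) * (2 * \<bar>D\<bar>))"
  proof -
    have "\<bar>x * D\<bar> \<le> 2 * \<bar>D\<bar>"
      using assms(4) by (simp add: abs_mult mult_right_mono)
    then show ?thesis
      using assms(2) mult_left_mono[of "- (2 * \<bar>D\<bar>)" "x * D" "2 - t"] by linarith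
  qed
  ultimately have "D\<^sup>2 \<le> 1/100 + (2 - t) * (2 * \<bar>D\<bar>)"
    using assms(1) by linarith
  also have "\<dots> \<le> 1/100 + (1/100) * (2 * \<bar>D\<bar>)"
    using assms(3) by (intro add_left_mono mult_right_mono) auto
  finally have "D\<^sup>2 \<le> 1/100 + \<bar>D\<bar> / 50"
    by simp
  moreover have "\<bar>D\<bar> * (1/2) \<le> \<bar>D\<bar> * \<bar>D\<bar>"
    using D2 by (intro mult_left_mono) auto
  then have "\<bar>D\<bar> * (1/2) \<le> D\<^sup>2"
    by (simp add: power2_eq_square)
  ultimately show False
    using D2 by linarith
qed

lemma trace_recurrence_three_small:
  fixes u :: "nat \<Rightarrow> real"
  assumes rec: "\<And>k. u (Suc (Suc k)) = t * u (Suc k) - u k"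
    and t: "0 \<le> t" "t < 2" "2 - t < 1/100"
    and small: "(u 0)\<^sup>2 + (u 1)\<^sup>2 - t * u 0 * u 1 < 1/100"
    and "u 0 > 0"
  obtains p where "\<bar>u p\<bar> < 2" "\<bar>u (p + 1)\<bar> < 2" "\<bar>u (p + 2)\<bar> < 2"
proof -
  have inv: "(u k)\<^sup>2 + (u (Suc k))\<^sup>2 - t * u k * u (Suc k) < 1/100" for k
    using trace_recurrence_invariant[of u t k, OF rec] small by simp
  \<comment> \<open>at the first sign change the invariant makes \<open>u\<close> small,
    and as \<open>t\<close> is close to 2 the next steps are short\<close>
  define m where "m = (LEAST m. u m \<le> 0)"
  have um: "u m \<le> 0"
    unfolding m_def using trace_recurrence_sign_change[OF rec t(2) \<open>u 0 > 0\<close>] by (rule LeastI_ex)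
  then obtain p where mp: "m = Suc p"
    using \<open>u 0 > 0\<close> by (cases m) auto
  have up: "u p > 0"
    using not_less_Least[of p "\<lambda>m. u m \<le> 0"] mp m_def by simp
  have "- (t * u p * u (Suc p)) \<ge> 0"
    using t up um mp by (simp add: mult_nonneg_nonpos)
  then have "(u p)\<^sup>2 < 1/100"
    using inv[of p] zero_le_power2[of "u (Suc p)"] by linarith
  then have "(u p)\<^sup>2 < (1/10)\<^sup>2"
    by (simp add: power2_eq_square)
  then have u0: "\<bar>u p\<bar> < 1/10"
    using abs_le_square_iff[of "1/10" "u p"] by fastforce
  have u1: "\<bar>u (Suc p)\<bar> < 6/10"
    using small_invariant_small_step[OF inv[of p] _ t(3)] u0 t(2) by linarith
  have u2: "\<bar>u (Suc (Suc p))\<bar> < 11/10"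
    using small_invariant_small_step[OF inv[of "Suc p"] _ t(3)] u1 t(2) by linarith
  show thesis
    using u0 u1 u2 by (intro that[of p]) (simp_all add: numeral_eq_Suc)
qed

lemma trace_recurrence_abs_eq:
  fixes u v :: "nat \<Rightarrow> real"
  assumes rec_u: "\<And>k. u (Suc (Suc k)) = t * u (Suc k) - u k"
    and rec_v: "\<And>k. v (Suc (Suc k)) = t * v (Suc k) - v k"
    and t: "0 \<le> t" "t < 2" "2 - t < 1/100"
    and small: "(u 0)\<^sup>2 + (u 1)\<^sup>2 - t * u 0 * u 1 < 1/100"
    and elliptic_eq: "\<And>k. \<bar>u k\<bar> < 2 \<Longrightarrow> \<bar>v k\<bar> = \<bar>u k\<bar>"
  shows "\<bar>v 0\<bar> = \<bar>u 0\<bar>"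
proof (cases "u 0 = 0")
  case False
  define u' where "u' k = sgn (u 0) * u k" for k
  have rec_u': "u' (Suc (Suc k)) = t * u' (Suc k) - u' k" for k
    unfolding u'_def rec_u by (simp add: algebra_simps)
  have abs_u': "\<bar>u' k\<bar> = \<bar>u k\<bar>" for k
    using False by (simp add: u'_def abs_mult abs_sgn_eq)
  have "(u' 0)\<^sup>2 + (u' 1)\<^sup>2 - t * u' 0 * u' 1 = (u 0)\<^sup>2 + (u 1)\<^sup>2 - t * u 0 * u 1"
    using False by (simp add: u'_def power_mult_distrib sgn_if)
  moreover have "u' 0 > 0"
    using False by (simp add: u'_def abs_sgn[symmetric] mult.commute)
  ultimately obtain p where "\<bar>u p\<bar> < 2" "\<bar>u (p + 1)\<bar> < 2" "\<bar>u (p + 2)\<bar> < 2"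
    using trace_recurrence_three_small[of u' t, OF rec_u' t] small unfolding abs_u' by metis
  define w where "w k = (u k)\<^sup>2 - (v k)\<^sup>2" for k
  have "w n = w (n + 3) - (t\<^sup>2 - 1) * (w (n + 2) - w (n + 1))" for n
    using trace_recurrence_squares[of u t n, OF rec_u] trace_recurrence_squares[of v t n, OF rec_v]
    unfolding w_def by (simp add: algebra_simps)
  moreover have "w p = 0" "w (p + 1) = 0" "w (p + 2) = 0"
    unfolding w_def using elliptic_eq \<open>\<bar>u p\<bar> < 2\<close> \<open>\<bar>u (p + 1)\<bar> < 2\<close> \<open>\<bar>u (p + 2)\<bar> < 2\<close>
    by (simp_all add: power2_eq_iff_abs_eq)
  ultimately have "w 0 = 0"
    by (rule third_order_recurrence_zero) simp
  then show ?thesis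
    by (simp add: w_def power2_eq_iff_abs_eq)
qed (use elliptic_eq in simp)

section \<open>Matrices close to the identity\<close>

definition max_entry :: "real^2^2 \<Rightarrow> real" where
  "max_entry M = max (max \<bar>M$1$1\<bar> \<bar>M$1$2\<bar>) (max \<bar>M$2$1\<bar> \<bar>M$2$2\<bar>)"

lemma max_entry_mat2: "max_entry (mat2 a b c d) = max (max \<bar>a\<bar> \<bar>b\<bar>) (max \<bar>c\<bar> \<bar>d\<bar>)"
  by (simp add: max_entry_def)

lemma max_entry_le_iff:
  "max_entry M \<le> e \<longleftrightarrow> \<bar>M$1$1\<bar> \<le> e \<and> \<bar>M$1$2\<bar> \<le> e \<and> \<bar>M$2$1\<bar> \<le> e \<and> \<bar>M$2$2\<bar> \<le> e"
  by (simp add: max_entry_def)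

lemma abs_entry_le_max_entry: "\<bar>M$i$j\<bar> \<le> max_entry M"
  using exhaust_2[of i] exhaust_2[of j] by (elim disjE) (simp_all add: max_entry_def le_max_iff_disj)

lemma max_entry_le: "(\<And>i j. \<bar>M$i$j\<bar> \<le> e) \<Longrightarrow> max_entry M \<le> e"
  by (simp add: max_entry_le_iff)

lemma max_entry_nonneg: "0 \<le> max_entry M"
  using abs_entry_le_max_entry[of M 1 1] by linarith

lemma abs_trace_le_max_entry: "\<bar>trace M\<bar> \<le> 2 * max_entry M"
  using abs_entry_le_max_entry[of M 1 1] abs_entry_le_max_entry[of M 2 2] by (simp add: trace_2)

lemma max_entry_mult: "max_entry (A ** B) \<le> 2 * max_entry A * max_entry B"
proof (rule max_entry_le)
  fix i j
  have bound: "\<bar>A$i$k * B$k$j\<bar> \<le> max_entry A * max_entry B" for k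
    unfolding abs_mult by (intro mult_mono abs_entry_le_max_entry max_entry_nonneg abs_ge_zero)
  show "\<bar>(A ** B)$i$j\<bar> \<le> 2 * max_entry A * max_entry B"
    using abs_triangle_ineq[of "A$i$1 * B$1$j" "A$i$2 * B$2$j"]
      bound[of 1] bound[of 2] unfolding matrix_mult_nth2 by linarith
qed

lemma max_entry_add: "max_entry (A + B) \<le> max_entry A + max_entry B"
proof (rule max_entry_le)
  fix i j
  show "\<bar>(A + B)$i$j\<bar> \<le> max_entry A + max_entry B"
    using abs_triangle_ineq[of "A$i$j" "B$i$j"] abs_entry_le_max_entry[of A i j]
      abs_entry_le_max_entry[of B i j] by simp
qed

lemma max_entry_adjugate: "max_entry (adjugate M) = max_entry M"
  by (cases M rule: mat2_cases) (simp add: max_entry_mat2 max.commute max.left_commute)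

lemma max_entry_adjugate_diff_one: "max_entry (adjugate A - mat 1) = max_entry (A - mat 1)"
proof -
  have "adjugate A - mat 1 = adjugate (A - mat 1)"
    by (cases A rule: mat2_cases) (simp add: mat2_one)
  then show ?thesis
    by (simp add: max_entry_adjugate)
qed

lemma max_entry_le_norm: "max_entry M \<le> norm M"
proof (rule max_entry_le)
  fix i j
  show "\<bar>M$i$j\<bar> \<le> norm M"
    using component_le_norm_cart[of "M$i" j] Finite_Cartesian_Product.norm_nth_le[of M i] by linarith
qed

lemma max_entry_mult_near_one:
  assumes "max_entry (A - mat 1) \<le> \<alpha>" "max_entry (B - mat 1) \<le> \<beta>" "\<alpha> \<le> 1"
  shows "max_entry (A ** B - mat 1) \<le> 3 * (\<alpha> + \<beta>)"
proof -
  define E F where "E = A - mat 1" "F = B - mat 1"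
  have "A ** B - mat 1 = E + (F + E ** F)"
    by (simp add: E_F_def matrix_diff_ldistrib matrix_diff_rdistrib algebra_simps)
  then have "max_entry (A ** B - mat 1) \<le> max_entry E + (max_entry F + 2 * max_entry E * max_entry F)"
    using max_entry_add[of E "F + E ** F"] max_entry_add[of F "E ** F"] max_entry_mult[of E F] by simp
  moreover have "max_entry E * max_entry F \<le> 1 * \<beta>"
    using assms max_entry_nonneg[of E] max_entry_nonneg[of F] by (intro mult_mono) (auto simp: E_F_def)
  ultimately show ?thesis
    using assms max_entry_nonneg[of E] by (simp add: E_F_def)
qed

lemma max_entry_conj_near_one:
  assumes "det S = 1" "max_entry S \<le> C"
  shows "max_entry (S ** T ** adjugate S - mat 1) \<le> 4 * C\<^sup>2 * max_entry (T - mat 1)"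
proof -
  define E where "E = T - mat 1"
  have "S ** T ** adjugate S - mat 1 = S ** E ** adjugate S"
    using assms(1) by (simp add: E_def matrix_mul_adjugate matrix_diff_ldistrib matrix_diff_rdistrib)
  moreover have "max_entry (S ** E ** adjugate S) \<le> 2 * max_entry (S ** E) * max_entry S"
    using max_entry_mult[of "S ** E" "adjugate S"] by (simp add: max_entry_adjugate)
  moreover have "max_entry (S ** E) * max_entry S \<le> (2 * max_entry S * max_entry E) * max_entry S"
    using max_entry_mult[of S E] max_entry_nonneg[of S] by (rule mult_right_mono)
  moreover have "max_entry S * max_entry S * max_entry E \<le> C * C * max_entry E"
    using assms(2) max_entry_nonneg[of S] max_entry_nonneg[of E] by (intro mult_right_mono mult_mono) auto
  ultimately show ?thesis
    by (simp add: E_def power2_eq_square mult_ac)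
qed

lemma trace_ge_one_near_one: "max_entry (E - mat 1) \<le> 1/2 \<Longrightarrow> 1 \<le> trace E"
  using abs_entry_le_max_entry[of "E - mat 1" 1 1] abs_entry_le_max_entry[of "E - mat 1" 2 2]
  by (simp add: trace_2 mat_def)

lemma trace_invariant_near_identity:
  assumes K: "1 \<le> K" "max_entry A \<le> K" and B: "max_entry (B - mat 1) \<le> 1 / (10000 * K\<^sup>2)"
  defines "t \<equiv> trace B" and "u0 \<equiv> trace A" and "u1 \<equiv> trace (A ** B)"
  shows "0 \<le> t" "2 - t < 1/100" "u0\<^sup>2 + u1\<^sup>2 - t * u0 * u1 < 1/100"
proof -
  define \<eta> where "\<eta> = 1 / (10000 * K\<^sup>2)"
  define E where "E = B - mat 1"
  define D where "D = trace (A ** E)"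
  have K2: "1 \<le> K\<^sup>2"
    using K(1) by (simp add: one_le_power)
  have \<eta>: "0 < \<eta>" "\<eta> \<le> 1/10000" "K * \<eta> \<le> 1/10000" "K\<^sup>2 * \<eta> = 1/10000"
    using K(1) K2 by (auto simp: \<eta>_def field_simps power2_eq_square)
  have E: "max_entry E \<le> \<eta>"
    using B by (simp add: E_def \<eta>_def)
  have t: "t = 2 + trace E" and u1: "u1 = u0 + D"
    by (simp_all add: t_def E_def u0_def u1_def D_def trace_sub trace_I matrix_diff_ldistrib)
  have "\<bar>D\<bar> \<le> 4 * (K * \<eta>)"
    using abs_trace_le_max_entry[of "A ** E"] max_entry_mult[of A E] K E max_entry_nonneg[of A]
      mult_mono[OF K(2) E] max_entry_nonneg[of E] by (simp add: D_def)
  then have "\<bar>D\<bar> \<le> 4 / 10000"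
    using \<eta>(3) by simp
  then have D: "\<bar>D\<bar> \<le> 4 / 10000" "D\<^sup>2 \<le> 16 / 100000000"
    using power_mono[of "\<bar>D\<bar>" "4 / 10000" 2] by (simp_all add: power2_eq_square)
  have "\<bar>trace E\<bar> \<le> 2 * \<eta>"
    using abs_trace_le_max_entry[of E] E by linarith
  then show "0 \<le> t" "2 - t < 1/100"
    using \<eta>(2) t by linarith+
  have "\<bar>u0\<bar> \<le> 2 * K" "\<bar>u1\<bar> \<le> 3 * K"
    using abs_trace_le_max_entry[of A] K D(1) unfolding u0_def[symmetric] u1 by linarith+
  then have "\<bar>(2 - t) * (u0 * u1)\<bar> \<le> (2 * \<eta>) * ((2 * K) * (3 * K))"
    using \<open>\<bar>trace E\<bar> \<le> 2 * \<eta>\<close> unfolding abs_mult t by (intro mult_mono) auto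
  also have "\<dots> = 12 / 10000"
    using \<eta>(4) by (simp add: power2_eq_square algebra_simps)
  finally have "\<bar>(2 - t) * (u0 * u1)\<bar> \<le> 12 / 10000" .
  moreover have "u0\<^sup>2 + u1\<^sup>2 - t * u0 * u1 = D\<^sup>2 + (2 - t) * (u0 * u1)"
    unfolding u1 by (simp add: power2_eq_square algebra_simps)
  ultimately show "u0\<^sup>2 + u1\<^sup>2 - t * u0 * u1 < 1/100"
    using D(2) by linarith
qed

primrec matpow :: "real^2^2 \<Rightarrow> nat \<Rightarrow> real^2^2" where
  "matpow B 0 = mat 1"
| "matpow B (Suc k) = matpow B k ** B"

lemma psl_eq_matpow: "psl_eq X Y \<Longrightarrow> psl_eq (matpow X k) (matpow Y k)"
  by (induction k) (auto intro: psl_eq_mult)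

lemma trace_matpow_recurrence:
  assumes "det B = 1"
  shows "trace (A ** matpow B (Suc (Suc k))) = trace B * trace (A ** matpow B (Suc k)) - trace (A ** matpow B k)"
proof -
  have "matpow B (Suc (Suc k)) = matpow B k ** (B ** B)"
    by (simp add: matrix_mul_assoc)
  also have "\<dots> = trace B *\<^sub>R matpow B (Suc k) - matpow B k"
    using assms by (simp add: cayley_hamilton2 matrix_diff_ldistrib matrix_scalar_ac scalar_matrix_assoc)
  finally show ?thesis
    by (simp add: matrix_diff_ldistrib matrix_scalar_ac trace_sub trace_scaleR2 scalar_matrix_assoc[symmetric])
qed

locale psl_rep = group G for G :: "('g, 'z) monoid_scheme" (structure) +
  fixes \<rho> :: "'g \<Rightarrow> real^2^2"
  assumes psl_hom: "psl_hom G \<rho>"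
begin

lemma det_rep: "g \<in> carrier G \<Longrightarrow> det (\<rho> g) = 1"
  using psl_hom by (auto simp: psl_hom_def SL2_def)

lemma rep_mult: "g \<in> carrier G \<Longrightarrow> h \<in> carrier G \<Longrightarrow> psl_eq (\<rho> (g \<otimes> h)) (\<rho> g ** \<rho> h)"
  using psl_hom by (auto simp: psl_hom_def)

lemma rep_one: "psl_eq (\<rho> \<one>) (mat 1)"
proof -
  define N where "N = \<rho> \<one>"
  have "psl_eq N (N ** N)"
    using rep_mult[of \<one> \<one>] by (simp add: N_def)
  then have "psl_eq (N ** adjugate N) (N ** N ** adjugate N)"
    by (rule psl_eq_mult_right)
  then have "psl_eq (mat 1) N"
    using det_rep[of \<one>] by (simp add: N_def matrix_mul_adjugate flip: matrix_mul_assoc)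
  then show ?thesis
    unfolding N_def by (rule psl_eq_sym)
qed

lemma rep_inv: "g \<in> carrier G \<Longrightarrow> psl_eq (\<rho> (inv g)) (adjugate (\<rho> g))"
proof -
  assume g: "g \<in> carrier G"
  have "psl_eq (mat 1) (\<rho> g ** \<rho> (inv g))"
    using rep_mult[OF g inv_closed[OF g]] rep_one g by (metis psl_eq_sym psl_eq_trans r_inv)
  then have "psl_eq (adjugate (\<rho> g) ** mat 1) (adjugate (\<rho> g) ** (\<rho> g ** \<rho> (inv g)))"
    by (rule psl_eq_mult_left)
  then show ?thesis
    using det_rep[OF g] by (simp add: adjugate_matrix_mul matrix_mul_assoc psl_eq_sym)
qed

lemma rep_mult_pow:
  "g \<in> carrier G \<Longrightarrow> h \<in> carrier G \<Longrightarrow> psl_eq (\<rho> (g \<otimes> h [^] (k::nat))) (\<rho> g ** matpow (\<rho> h) k)"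
proof (induction k)
  case (Suc k)
  then have "psl_eq (\<rho> ((g \<otimes> h [^] k) \<otimes> h)) (\<rho> g ** matpow (\<rho> h) k ** \<rho> h)"
    by (meson nat_pow_closed m_closed rep_mult psl_eq_mult_right psl_eq_trans)
  then show ?case
    using Suc.prems by (simp add: m_assoc matrix_mul_assoc)
qed simp

lemma psl_image_iff: "M \<in> psl_image G \<rho> \<longleftrightarrow> (\<exists>g\<in>carrier G. psl_eq M (\<rho> g))"
  by (auto simp: psl_image_def psl_eq_def)

lemma rep_in_psl_image: "g \<in> carrier G \<Longrightarrow> \<rho> g \<in> psl_image G \<rho>"
  by (auto simp: psl_image_iff intro!: bexI[of _ g])

lemma det_psl_image: "M \<in> psl_image G \<rho> \<Longrightarrow> det M = 1"
  by (auto simp: psl_image_iff det_rep dest: psl_eq_det)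

lemma psl_image_mult: "M \<in> psl_image G \<rho> \<Longrightarrow> N \<in> psl_image G \<rho> \<Longrightarrow> M ** N \<in> psl_image G \<rho>"
  unfolding psl_image_iff by (meson m_closed psl_eq_mult psl_eq_sym psl_eq_trans rep_mult)

lemma psl_image_adjugate: "M \<in> psl_image G \<rho> \<Longrightarrow> adjugate M \<in> psl_image G \<rho>"
  unfolding psl_image_iff by (meson inv_closed psl_eq_adjugate psl_eq_sym psl_eq_trans rep_inv)

lemma psl_image_one: "mat 1 \<in> psl_image G \<rho>"
  using rep_one by (auto simp: psl_image_iff psl_eq_sym intro!: bexI[of _ \<one>])

lemma abs_trace_mult_matpow:
  assumes "g \<in> carrier G" "h \<in> carrier G" "psl_eq B (\<rho> h)"
  shows "\<bar>trace (\<rho> g ** matpow B k)\<bar> = abs_tr (\<rho> (g \<otimes> h [^] k))"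
proof -
  have "psl_eq (\<rho> (g \<otimes> h [^] k)) (\<rho> g ** matpow B k)"
    using rep_mult_pow[OF assms(1,2)] psl_eq_mult_left[OF psl_eq_matpow[OF psl_eq_sym[OF assms(3)]]]
    by (rule psl_eq_trans)
  then show ?thesis
    by (simp add: abs_tr_eq_abs_trace psl_eq_abs_trace)
qed

end

locale rot_equal_reps =
  \<rho>1: psl_rep G \<rho>1 + \<rho>2: psl_rep G \<rho>2
  for G :: "('g, 'z) monoid_scheme" (structure) and \<rho>1 \<rho>2 +
  assumes rot_eq: "\<forall>\<gamma>\<in>carrier G. rot (\<rho>1 \<gamma>) = rot (\<rho>2 \<gamma>)"
begin

lemma abs_tr_eq_if_elliptic:
  "\<gamma> \<in> carrier G \<Longrightarrow> abs_tr (\<rho>1 \<gamma>) < 2 \<Longrightarrow> abs_tr (\<rho>2 \<gamma>) = abs_tr (\<rho>1 \<gamma>)"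
  using abs_tr_eq_if_rot_eq \<rho>1.det_rep \<rho>2.det_rep rot_eq by blast

lemma abs_tr_eq_if_elliptic_near_identity:
  assumes near: "\<And>\<eta>. \<eta> > 0 \<Longrightarrow> \<exists>B\<in>psl_image G \<rho>1. abs_tr B < 2 \<and> max_entry (B - mat 1) \<le> \<eta>"
    and \<gamma>: "\<gamma> \<in> carrier G"
  shows "abs_tr (\<rho>2 \<gamma>) = abs_tr (\<rho>1 \<gamma>)"
proof -
  define K where "K = 1 + max_entry (\<rho>1 \<gamma>)"
  have K: "1 \<le> K" "max_entry (\<rho>1 \<gamma>) \<le> K"
    using max_entry_nonneg by (simp_all add: K_def)
  then obtain B where B: "B \<in> psl_image G \<rho>1" "abs_tr B < 2" "max_entry (B - mat 1) \<le> 1 / (10000 * K\<^sup>2)"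
    using near[of "1 / (10000 * K\<^sup>2)"] by auto
  then obtain h where h: "h \<in> carrier G" "psl_eq B (\<rho>1 h)"
    using \<rho>1.psl_image_iff by blast
  define t where "t = trace B"
  have "abs_tr (\<rho>2 h) = \<bar>t\<bar>"
    using abs_tr_eq_if_elliptic[OF h(1)] B(2) psl_eq_abs_tr[OF h(2)] by (simp add: t_def abs_tr_eq_abs_trace)
  then obtain B2 where B2: "psl_eq B2 (\<rho>2 h)" "trace B2 = t"
    using psl_eq_lift_trace[of "\<rho>2 h" t] by (auto simp: abs_tr_eq_abs_trace)
  \<comment> \<open>up to sign, \<open>u k\<close> and \<open>v k\<close> are the traces of \<open>\<rho>1\<close> and \<open>\<rho>2\<close> at \<open>\<gamma> \<otimes> h [^] k\<close>\<close>
  define u v where "u k = trace (\<rho>1 \<gamma> ** matpow B k)" "v k = trace (\<rho>2 \<gamma> ** matpow B2 k)" for k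
  have rec_u: "u (Suc (Suc k)) = t * u (Suc k) - u k" for k
    using trace_matpow_recurrence \<rho>1.det_psl_image[OF B(1)] by (simp add: u_v_def t_def)
  have rec_v: "v (Suc (Suc k)) = t * v (Suc k) - v k" for k
    using trace_matpow_recurrence psl_eq_det[OF B2(1)] \<rho>2.det_rep[OF h(1)] B2(2) by (simp add: u_v_def)
  have "\<bar>v k\<bar> = \<bar>u k\<bar>" if "\<bar>u k\<bar> < 2" for k
    using that abs_tr_eq_if_elliptic[of "\<gamma> \<otimes> h [^] k"] \<gamma> h
      \<rho>1.abs_trace_mult_matpow[OF \<gamma> h] \<rho>2.abs_trace_mult_matpow[OF \<gamma> h(1) B2(1)]
    by (simp add: u_v_def)
  moreover have "0 \<le> t" "2 - t < 1/100" "(u 0)\<^sup>2 + (u 1)\<^sup>2 - t * u 0 * u 1 < 1/100"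
    using trace_invariant_near_identity[OF K B(3)] by (simp_all add: u_v_def t_def)
  ultimately have "\<bar>v 0\<bar> = \<bar>u 0\<bar>"
    using trace_recurrence_abs_eq[of u t v, OF rec_u rec_v] B(2) by (simp add: abs_tr_eq_abs_trace t_def)
  then show ?thesis
    by (simp add: u_v_def abs_tr_eq_abs_trace)
qed

end

section \<open>Boundary points and elementary representations\<close>

lemma matrix_vector_mult_nth2:
  "((M :: real^2^2) *v v)$1 = M$1$1 * v$1 + M$1$2 * v$2"
  "((M :: real^2^2) *v v)$2 = M$2$1 * v$1 + M$2$2 * v$2"
  by (simp_all add: matrix_vector_mult_def sum_2)

lemma vec2_eq_iff: "(v :: real^2) = w \<longleftrightarrow> v$1 = w$1 \<and> v$2 = w$2"
  by (simp add: vec_eq_iff forall_2)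

lemma matrix_vector_mult_neq_0:
  assumes "det M \<noteq> 0" "v \<noteq> 0"
  shows "(M :: real^2^2) *v v \<noteq> 0"
proof
  assume "M *v v = 0"
  then have "(adjugate M ** M) *v v = 0"
    by (simp flip: matrix_vector_mul_assoc)
  then have "det M *\<^sub>R v = 0"
    by (simp add: adjugate_matrix_mul flip: scaleR_matrix_vector_assoc)
  then show False
    using assms by simp
qed

lemma kernel_nonzero:
  assumes "det (N :: real^2^2) = 0"
  obtains v where "v \<noteq> 0" "N *v v = 0"
  using assms det_nz_iff_inj[of "(*v) N"] linear_inj_iff_eq_0[of "(*v) N"] by auto

lemma kernel_parallel:
  assumes "N \<noteq> 0" "(N :: real^2^2) *v v = 0" "N *v w = 0"
  shows "v$1 * w$2 = v$2 * w$1"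
proof -
  have rows: "N$i$1 * v$1 + N$i$2 * v$2 = 0" "N$i$1 * w$1 + N$i$2 * w$2 = 0" for i
    using assms(2,3) exhaust_2[of i] matrix_vector_mult_nth2[of N] by (auto simp: vec2_eq_iff)
  have "N$i$j * (v$1 * w$2 - v$2 * w$1) = 0" for i j
  proof -
    have "N$i$1 * (v$1 * w$2 - v$2 * w$1) = (N$i$1 * v$1 + N$i$2 * v$2) * w$2 - (N$i$1 * w$1 + N$i$2 * w$2) * v$2"
      "N$i$2 * (v$1 * w$2 - v$2 * w$1) = (N$i$1 * w$1 + N$i$2 * w$2) * v$1 - (N$i$1 * v$1 + N$i$2 * v$2) * w$1"
      by (simp_all add: algebra_simps)
    then show ?thesis
      using rows[of i] exhaust_2[of j] by auto
  qed
  moreover obtain i j where "N$i$j \<noteq> 0"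
    using assms(1) by (metis vec_eq_iff zero_index)
  ultimately show ?thesis
    by (metis eq_iff_diff_eq_0 mult_eq_0_iff)
qed

definition proj_point :: "real^2 \<Rightarrow> complex option" where
  "proj_point v = (if v$2 = 0 then None else Some (complex_of_real (v$1 / v$2)))"

definition boundary_points :: "complex option set" where
  "boundary_points = proj_point ` (UNIV - {0})"

lemma boundary_points_subset: "boundary_points \<subseteq> closed_H2"
  by (auto simp: boundary_points_def proj_point_def closed_H2_def)

lemma boundary_pointsE:
  assumes "p \<in> boundary_points"
  obtains v where "v \<noteq> 0" "p = proj_point v"
  using assms by (auto simp: boundary_points_def)

lemma proj_point_eq_if_parallel:
  assumes "v \<noteq> 0" "w \<noteq> 0" "v$1 * w$2 = v$2 * w$1"
  shows "proj_point v = proj_point w"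
  using assms by (auto simp: proj_point_def vec2_eq_iff frac_eq_eq mult.commute simp del: of_real_divide)

lemma mob_Some_of_real:
  "mob M (Some (complex_of_real r)) =
     (if M$2$1 * r + M$2$2 = 0 then None
      else Some (complex_of_real ((M$1$1 * r + M$1$2) / (M$2$1 * r + M$2$2))))"
  by (simp add: mob_def flip: of_real_mult of_real_add of_real_divide)

lemma mob_proj_point:
  assumes "v \<noteq> 0"
  shows "mob M (proj_point v) = proj_point (M *v v)"
proof (cases "v$2 = 0")
  case True
  then show ?thesis
    using assms by (simp add: proj_point_def mob_def vec2_eq_iff matrix_vector_mult_nth2)
next
  case False
  have "M$i$1 * (v$1 / v$2) + M$i$2 = (M *v v)$i / v$2" for i
    using False exhaust_2[of i] by (auto simp: field_simps matrix_vector_mult_nth2)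
  then show ?thesis
    using False by (simp add: proj_point_def mob_Some_of_real del: of_real_divide)
qed

lemma mob_in_boundary_points:
  "det S \<noteq> 0 \<Longrightarrow> p \<in> boundary_points \<Longrightarrow> mob S p \<in> boundary_points"
  by (elim boundary_pointsE) (simp add: boundary_points_def mob_proj_point matrix_vector_mult_neq_0)

lemma mob_mult:
  "det R \<noteq> 0 \<Longrightarrow> p \<in> boundary_points \<Longrightarrow> mob (S ** R) p = mob S (mob R p)"
  by (elim boundary_pointsE) (simp add: mob_proj_point matrix_vector_mult_neq_0 matrix_vector_mul_assoc)

lemma mob_one: "p \<in> boundary_points \<Longrightarrow> mob (mat 1) p = p"
  by (elim boundary_pointsE) (simp add: mob_proj_point)

lemma mob_adjugate_cancel:
  assumes "det S = 1" "p \<in> boundary_points"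
  shows "mob (adjugate S) (mob S p) = p" "mob S (mob (adjugate S) p) = p"
proof -
  have "mob (adjugate S) (mob S p) = mob (adjugate S ** S) p"
    using assms by (simp add: mob_mult)
  then show "mob (adjugate S) (mob S p) = p"
    using assms by (simp add: adjugate_matrix_mul mob_one)
  have "mob S (mob (adjugate S) p) = mob (S ** adjugate S) p"
    using assms by (simp add: mob_mult)
  then show "mob S (mob (adjugate S) p) = p"
    using assms by (simp add: matrix_mul_adjugate mob_one)
qed

context psl_rep
begin

lemma elementary_if_finite_orbit:
  assumes "p \<in> closed_H2" "finite ((\<lambda>S. mob S p) ` psl_image G \<rho>)"
  shows "elementary G \<rho>"
proof -
  have "(\<lambda>g. mob (\<rho> g) p) ` carrier G \<subseteq> (\<lambda>S. mob S p) ` psl_image G \<rho>"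
    using rep_in_psl_image by auto
  then show ?thesis
    unfolding elementary_def using assms finite_subset by blast
qed

lemma pair_preserved_orbit_bound:
  assumes ab: "a \<in> boundary_points" "b \<in> boundary_points"
    and pair: "\<And>S. S \<in> psl_image G \<rho> \<Longrightarrow> mob S a \<in> {a, b} \<or> mob S b \<in> {a, b}"
    and x: "x \<in> psl_image G \<rho>" "mob x a \<notin> {a, b}"
    and RS: "R \<in> psl_image G \<rho>" "S \<in> psl_image G \<rho>" "mob R a = mob S a"
  shows "mob S b \<in> (\<lambda>c. mob R (mob (adjugate x) c)) ` {a, b}"
proof -
  define W where "W = x ** (adjugate R ** S)"
  have dets: "det x = 1" "det R = 1" "det S = 1" "det (adjugate R ** S) = 1"
    using x(1) RS by (simp_all add: det_psl_image det_mul)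
  have W: "W \<in> psl_image G \<rho>"
    unfolding W_def using x(1) RS by (intro psl_image_mult psl_image_adjugate)
  have mob_W: "mob W c = mob x (mob (adjugate R) (mob S c))" if "c \<in> boundary_points" for c
    using mob_mult[of "adjugate R ** S" c x] mob_mult[of S c "adjugate R"] dets that by (simp add: W_def)
  have "mob W a = mob x a"
    using mob_W[OF ab(1)] mob_adjugate_cancel(1)[OF dets(2) ab(1)] by (simp add: RS(3)[symmetric])
  then have "mob W b \<in> {a, b}"
    using pair[OF W] x(2) by auto
  moreover have "mob S b = mob R (mob (adjugate x) (mob W b))"
  proof -
    have Sb: "mob S b \<in> boundary_points" "mob (adjugate R) (mob S b) \<in> boundary_points"
      using ab(2) dets(2,3) by (simp_all add: mob_in_boundary_points)
    show ?thesis
      using mob_W[OF ab(2)] mob_adjugate_cancel(1)[OF dets(1) Sb(2)] mob_adjugate_cancel(2)[OF dets(2) Sb(1)]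
      by simp
  qed
  ultimately show ?thesis
    by blast
qed

lemma elementary_if_pair_preserved:
  assumes ab: "a \<in> boundary_points" "b \<in> boundary_points"
    and pair: "\<And>S. S \<in> psl_image G \<rho> \<Longrightarrow> mob S a \<in> {a, b} \<or> mob S b \<in> {a, b}"
  shows "elementary G \<rho>"
proof (cases "\<forall>S\<in>psl_image G \<rho>. mob S a \<in> {a, b}")
  case True
  then have "(\<lambda>S. mob S a) ` psl_image G \<rho> \<subseteq> {a, b}"
    by auto
  then have "finite ((\<lambda>S. mob S a) ` psl_image G \<rho>)"
    by (rule finite_subset) simp
  then show ?thesis
    using ab(1) boundary_points_subset elementary_if_finite_orbit by blast
next
  case False
  then obtain x where x: "x \<in> psl_image G \<rho>" "mob x a \<notin> {a, b}"
    by blast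
  obtain g where g: "g \<in> psl_image G \<rho>" "\<And>S. S \<in> psl_image G \<rho> \<Longrightarrow> mob S a = b \<Longrightarrow> mob g a = b"
    using psl_image_one by blast
  define Z where "Z = {a, b} \<union> (\<Union>R\<in>{mat 1, g}. (\<lambda>c. mob R (mob (adjugate x) c)) ` {a, b})"
  have "mob S b \<in> Z" if S: "S \<in> psl_image G \<rho>" for S
  proof (cases "mob S b \<in> {a, b}")
    case False
    then have "mob S a = a \<or> mob S a = b"
      using pair[OF S] by auto
    then obtain R where "R \<in> {mat 1, g}" "mob R a = mob S a"
    proof (elim disjE)
      assume "mob S a = a"
      then show thesis
        using that[of "mat 1"] mob_one[OF ab(1)] by simp
    next
      assume "mob S a = b"
      then show thesis
        using that[of g] g(2)[OF S] by simp
    qed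
    then show ?thesis
      using pair_preserved_orbit_bound[OF ab pair x _ S] g(1) psl_image_one unfolding Z_def by blast
  qed (simp add: Z_def)
  then have "(\<lambda>S. mob S b) ` psl_image G \<rho> \<subseteq> Z"
    by auto
  then have "finite ((\<lambda>S. mob S b) ` psl_image G \<rho>)"
    by (rule finite_subset) (simp add: Z_def)
  then show ?thesis
    using ab(2) boundary_points_subset elementary_if_finite_orbit by blast
qed

end

section \<open>Non-elementary representations\<close>

definition eigenvector :: "real^2^2 \<Rightarrow> real^2 \<Rightarrow> bool" where
  "eigenvector X v \<longleftrightarrow> v \<noteq> 0 \<and> (\<exists>\<mu>. X *v v = \<mu> *\<^sub>R v)"

lemma parallel_imp_multiple:
  assumes "w \<noteq> 0" "w$1 * z$2 = w$2 * z$1"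
  obtains \<kappa> where "z = \<kappa> *\<^sub>R (w :: real^2)"
proof (cases "w$1 = 0")
  case True
  then have "w$2 \<noteq> 0" "z$1 = 0"
    using assms by (auto simp: vec2_eq_iff)
  then show thesis
    using that[of "z$2 / w$2"] True by (simp add: vec2_eq_iff)
next
  case False
  then have "z$2 = z$1 / w$1 * w$2"
    using assms(2) by (simp add: field_simps)
  then show thesis
    using that[of "z$1 / w$1"] False by (simp add: vec2_eq_iff)
qed

lemma eigenvector_intertwine:
  assumes "X ** T = T ** Z" "det T \<noteq> 0" "w \<noteq> 0" "Z *v w = \<kappa> *\<^sub>R w"
  shows "eigenvector X (T *v w)"
proof -
  have "X *v (T *v w) = T *v (Z *v w)"
    using assms(1) by (simp add: matrix_vector_mul_assoc)
  also have "\<dots> = \<kappa> *\<^sub>R (T *v w)"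
    using assms(4) by (simp add: matrix_vector_mult_scaleR)
  finally have "X *v (T *v w) = \<kappa> *\<^sub>R (T *v w)" .
  then show ?thesis
    using assms(2,3) matrix_vector_mult_neq_0 by (auto simp: eigenvector_def)
qed

lemma traceless_square: "trace X = 0 \<Longrightarrow> X ** X = (- det X) *\<^sub>R (mat 1 :: real^2^2)"
  by (simp add: cayley_hamilton2)

lemma det_diff_traceless:
  fixes X W :: "real^2^2"
  shows "trace X = 0 \<Longrightarrow> trace W = 0 \<Longrightarrow> det (X - W) = det X + det W + trace (X ** W)"
  by (cases X rule: mat2_cases, cases W rule: mat2_cases)
    (simp add: algebra_simps flip: eq_neg_iff_add_eq_0)

lemma traceless_eigenvalue_square:
  fixes X :: "real^2^2"
  assumes "trace X = 0" "v \<noteq> 0" "X *v v = \<mu> *\<^sub>R v"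
  shows "\<mu>\<^sup>2 = - det X"
proof -
  have "(- det X) *\<^sub>R v = (X ** X) *v v"
    unfolding traceless_square[OF assms(1)] scaleR_matrix_vector_assoc[symmetric] by simp
  also have "\<dots> = \<mu>\<^sup>2 *\<^sub>R v"
    using assms(3) by (simp add: matrix_vector_mult_scaleR power2_eq_square flip: matrix_vector_mul_assoc)
  finally show ?thesis
    using assms(2) scaleR_cancel_right[of "- det X" v "\<mu>\<^sup>2"] by simp
qed

lemma traceless_shift_kernel:
  fixes X :: "real^2^2"
  assumes "trace X = 0" "X \<noteq> 0" "c\<^sup>2 = - det X"
  obtains k where "k \<noteq> 0" "(X - c *\<^sub>R mat 1) *v k = 0"
    "\<And>v. v \<noteq> 0 \<Longrightarrow> (X - c *\<^sub>R mat 1) *v v = 0 \<Longrightarrow> proj_point v = proj_point k"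
proof -
  have "det (X - c *\<^sub>R mat 1) = 0"
    using assms(1,3) by (cases X rule: mat2_cases)
      (simp add: mat2_one power2_eq_square algebra_simps flip: eq_neg_iff_add_eq_0)
  then obtain k where k: "k \<noteq> 0" "(X - c *\<^sub>R mat 1) *v k = 0"
    using kernel_nonzero by blast
  have nz: "X - c *\<^sub>R mat 1 \<noteq> 0"
  proof
    assume "X - c *\<^sub>R mat 1 = 0"
    then have "X = c *\<^sub>R mat 1"
      by simp
    moreover from this have "c = 0"
      using assms(1) by (simp add: trace_scaleR2 trace_I)
    ultimately show False
      using assms(2) by simp
  qed
  show thesis
  proof (rule that[OF k])
    fix v
    assume "v \<noteq> 0" "(X - c *\<^sub>R mat 1) *v v = 0"
    then show "proj_point v = proj_point k"
      using proj_point_eq_if_parallel[OF _ k(1) kernel_parallel[OF nz _ k(2)]] by blast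
  qed
qed

lemma traceless_eigenvector_points:
  fixes X :: "real^2^2"
  assumes "trace X = 0" "X \<noteq> 0" "det X \<le> 0"
  obtains a b where "a \<in> boundary_points" "b \<in> boundary_points"
    "\<And>v. eigenvector X v \<Longrightarrow> proj_point v \<in> {a, b}" "\<exists>v. eigenvector X v"
proof -
  define \<sigma> where "\<sigma> = sqrt (- det X)"
  have \<sigma>2: "\<sigma>\<^sup>2 = - det X" "(- \<sigma>)\<^sup>2 = - det X"
    using assms(3) by (simp_all add: \<sigma>_def)
  obtain k1 where k1: "k1 \<noteq> 0" "(X - \<sigma> *\<^sub>R mat 1) *v k1 = 0"
    "\<And>v. v \<noteq> 0 \<Longrightarrow> (X - \<sigma> *\<^sub>R mat 1) *v v = 0 \<Longrightarrow> proj_point v = proj_point k1"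
    using traceless_shift_kernel[OF assms(1,2) \<sigma>2(1)] by blast
  obtain k2 where k2: "k2 \<noteq> 0"
    "\<And>v. v \<noteq> 0 \<Longrightarrow> (X - (- \<sigma>) *\<^sub>R mat 1) *v v = 0 \<Longrightarrow> proj_point v = proj_point k2"
    using traceless_shift_kernel[OF assms(1,2) \<sigma>2(2)] by blast
  show thesis
  proof
    show "proj_point k1 \<in> boundary_points" "proj_point k2 \<in> boundary_points"
      unfolding boundary_points_def using k1(1) k2(1) by (simp_all add: image_eqI)
    show "proj_point v \<in> {proj_point k1, proj_point k2}" if v: "eigenvector X v" for v
    proof -
      obtain \<mu> where \<mu>: "v \<noteq> 0" "X *v v = \<mu> *\<^sub>R v"
        using v by (auto simp: eigenvector_def)
      then have "\<mu>\<^sup>2 = \<sigma>\<^sup>2"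
        using traceless_eigenvalue_square[OF assms(1)] \<sigma>2(1) by simp
      then have "\<mu> = \<sigma> \<or> \<mu> = - \<sigma>"
        by (simp only: power2_eq_iff)
      moreover have "(X - \<mu> *\<^sub>R mat 1) *v v = 0"
        using \<mu>(2) by (simp add: matrix_vector_mult_diff_rdistrib flip: scaleR_matrix_vector_assoc)
      ultimately show ?thesis
        using k1(3)[OF \<mu>(1)] k2(2)[OF \<mu>(1)] by auto
    qed
    have "X *v k1 = \<sigma> *\<^sub>R k1"
      using k1(2) by (simp add: matrix_vector_mult_diff_rdistrib flip: scaleR_matrix_vector_assoc)
    then show "\<exists>v. eigenvector X v"
      using k1(1) by (auto simp: eigenvector_def)
  qed
qed

lemma traceless_pair_degenerate:
  fixes X X' :: "real^2^2"
  assumes X: "trace X = 0" "trace X' = 0" "det X' = det X"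
    and "(trace (X ** X') / 2)\<^sup>2 = (det X)\<^sup>2"
  obtains \<epsilon> where "\<epsilon> * \<epsilon> = 1" "det (X - \<epsilon> *\<^sub>R X') = 0"
    "X ** (X - \<epsilon> *\<^sub>R X') + (X - \<epsilon> *\<^sub>R X') ** X = 0"
proof -
  have "trace (X ** X') / 2 = det X \<or> trace (X ** X') / 2 = - det X"
    using assms(4) by (simp only: power2_eq_iff)
  then obtain \<epsilon> :: real where \<epsilon>: "\<epsilon> * \<epsilon> = 1" "\<epsilon> * trace (X ** X') = - 2 * det X"
  proof (elim disjE)
    assume "trace (X ** X') / 2 = det X"
    then show thesis
      using that[of "-1"] by simp
  next
    assume "trace (X ** X') / 2 = - det X"
    then show thesis
      using that[of 1] by simp
  qed
  define Xe Y where "Xe = \<epsilon> *\<^sub>R X'" and "Y = X - \<epsilon> *\<^sub>R X'"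
  have tXe: "trace Xe = 0" and dXe: "det Xe = det X"
    using X \<epsilon>(1) by (simp_all add: Xe_def Y_def trace_scaleR2 det_scaleR2 power2_eq_square)
  have "trace (X ** Xe) = \<epsilon> * trace (X ** X')"
    by (simp add: Xe_def Y_def matrix_scalar_ac scalar_matrix_assoc[symmetric] trace_scaleR2)
  then have dY: "det Y = 0"
    using det_diff_traceless[OF X(1) tXe] dXe \<epsilon>(2) by (simp add: Xe_def Y_def)
  have tY: "trace Y = 0"
    using X(1) tXe by (simp add: Xe_def Y_def trace_sub)
  have "X ** X = Xe ** Xe"
    using traceless_square[OF X(1)] traceless_square[OF tXe] dXe by simp
  also have "\<dots> = (X - Y) ** (X - Y)"
    by (simp add: Xe_def Y_def)
  also have "\<dots> = X ** X - X ** Y - Y ** X + Y ** Y"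
    by (simp add: matrix_diff_ldistrib matrix_diff_rdistrib)
  finally have "X ** Y + Y ** X = Y ** Y"
    by (simp add: algebra_simps)
  then have "X ** Y + Y ** X = 0"
    using traceless_square[OF tY] dY by simp
  then show thesis
    using that \<epsilon>(1) dY by (simp add: Xe_def Y_def)
qed

lemma conj_intertwine:
  assumes "det S = 1"
  shows "(S ** X ** adjugate S) ** S = S ** X" "adjugate S ** (S ** X ** adjugate S) = X ** adjugate S"
  using assms by (simp_all add: adjugate_matrix_mul matrix_mul_assoc flip: matrix_mul_assoc)
    (simp add: matrix_mul_assoc adjugate_matrix_mul)

definition conj_defect :: "real^2^2 \<Rightarrow> real^2^2 \<Rightarrow> real" where
  "conj_defect S X = (trace (X ** (S ** X ** adjugate S)) / 2)\<^sup>2 - (det X)\<^sup>2"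

lemma conj_defect_zero_eigenvector:
  assumes S: "det S = 1" and X: "trace X = 0" "conj_defect S X = 0" and v0: "eigenvector X v0"
  obtains v where "eigenvector X v" "eigenvector X (S *v v) \<or> eigenvector X (adjugate S *v v)"
proof -
  define X' where "X' = S ** X ** adjugate S"
  have "trace X' = 0" "det X' = det X" "(trace (X ** X') / 2)\<^sup>2 = (det X)\<^sup>2"
    using S X by (simp_all add: X'_def trace_conj det_conj conj_defect_def)
  then obtain \<epsilon> where \<epsilon>: "\<epsilon> * \<epsilon> = 1" and Y: "det (X - \<epsilon> *\<^sub>R X') = 0"
      "X ** (X - \<epsilon> *\<^sub>R X') + (X - \<epsilon> *\<^sub>R X') ** X = 0"
    using traceless_pair_degenerate[OF X(1)] by blast
  show thesis
  \<comment> \<open>either \<open>S\<close> permutes the eigenlines of \<open>X\<close>,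
    or the kernel of \<open>X - \<epsilon> X'\<close> is an eigenline of both \<open>X\<close> and \<open>X'\<close>\<close>
  proof (cases "X = \<epsilon> *\<^sub>R X'")
    case True
    obtain \<mu> where \<mu>: "X *v v0 = \<mu> *\<^sub>R v0" "v0 \<noteq> 0"
      using v0 by (auto simp: eigenvector_def)
    have "X ** S = \<epsilon> *\<^sub>R (X' ** S)"
      using arg_cong[OF True, of "\<lambda>M. M ** S"] by (simp add: scalar_matrix_assoc)
    also have "\<dots> = S ** (\<epsilon> *\<^sub>R X)"
      using conj_intertwine(1)[OF S, of X] by (simp add: X'_def matrix_scalar_ac scalar_matrix_assoc)
    finally have "X ** S = S ** (\<epsilon> *\<^sub>R X)" .
    moreover have "(\<epsilon> *\<^sub>R X) *v v0 = (\<epsilon> * \<mu>) *\<^sub>R v0"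
      using \<mu>(1) by (simp flip: scaleR_matrix_vector_assoc)
    ultimately have "eigenvector X (S *v v0)"
      using S \<mu>(2) by (intro eigenvector_intertwine) simp_all
    then show thesis
      using that v0 by blast
  next
    case False
    define Y where "Y = X - \<epsilon> *\<^sub>R X'"
    have "Y \<noteq> 0"
      using False by (simp add: Y_def)
    obtain w where w: "w \<noteq> 0" "Y *v w = 0"
      using Y(1) kernel_nonzero by (auto simp: Y_def)
    have "(X ** Y + Y ** X) *v w = 0"
      using Y(2) by (simp add: Y_def)
    then have "Y *v (X *v w) = 0"
      using w(2) by (simp add: matrix_vector_mult_add_rdistrib flip: matrix_vector_mul_assoc)
    then obtain \<kappa> where \<kappa>: "X *v w = \<kappa> *\<^sub>R w"
      using parallel_imp_multiple[OF w(1) kernel_parallel[OF \<open>Y \<noteq> 0\<close> w(2)]] by blast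
    have "\<epsilon> *\<^sub>R (X' *v w) = \<kappa> *\<^sub>R w"
      using \<kappa> w(2) by (simp add: Y_def matrix_vector_mult_diff_rdistrib flip: scaleR_matrix_vector_assoc)
    then have "(\<epsilon> * \<epsilon>) *\<^sub>R (X' *v w) = (\<epsilon> * \<kappa>) *\<^sub>R w"
      by (metis scaleR_scaleR)
    then have "X' *v w = (\<epsilon> * \<kappa>) *\<^sub>R w"
      using \<epsilon>(1) by simp
    then have "eigenvector X (adjugate S *v w)"
      using S w(1) conj_intertwine(2)[OF S, of X] by (intro eigenvector_intertwine) (simp_all add: X'_def)
    moreover have "eigenvector X w"
      using \<kappa> w(1) by (auto simp: eigenvector_def)
    ultimately show thesis
      using that by blast
  qed
qed

lemma continuous_on_trace2: "continuous_on UNIV (trace :: real^2^2 \<Rightarrow> real)"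
  unfolding trace_2 by (intro continuous_on_add continuous_on_component continuous_on_id)

lemma continuous_on_det2: "continuous_on UNIV (det :: real^2^2 \<Rightarrow> real)"
  unfolding det_2 by (intro continuous_on_diff continuous_on_mult continuous_on_component continuous_on_id)

lemma continuous_on_conj_defect: "continuous_on UNIV (conj_defect S)"
  unfolding conj_defect_def trace_2 matrix_mult_nth2 det_2 adjugate_def mat2_nth
  by (intro continuous_on_diff continuous_on_power continuous_on_divide continuous_on_add
      continuous_on_mult continuous_on_const continuous_on_component continuous_on_id) auto

lemma conj_defect_scaleR: "conj_defect S (x *\<^sub>R X) = x ^ 4 * conj_defect S X"
  by (simp add: conj_defect_def matrix_scalar_ac scalar_matrix_assoc[symmetric] trace_scaleR2 det_scaleR2
      power2_eq_square power4_eq_xxxx field_simps)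

lemma compact_traceless_unit_sphere: "compact {X :: real^2^2. trace X = 0 \<and> norm X = 1 \<and> det X \<le> 0}"
proof -
  have "closed ({X :: real^2^2. trace X = 0} \<inter> {X. norm X = 1} \<inter> {X. det X \<le> 0})"
    by (intro closed_Int closed_Collect_eq closed_Collect_le continuous_on_trace2 continuous_on_det2
        continuous_on_norm_id continuous_on_const)
  moreover have "bounded {X :: real^2^2. trace X = 0 \<and> norm X = 1 \<and> det X \<le> 0}"
    by (rule bounded_subset[of "cball 0 1"]) auto
  ultimately show ?thesis
    by (simp add: compact_eq_bounded_closed Collect_conj_eq Int_assoc)
qed

context psl_rep
begin

lemma conj_defect_nonzero:
  assumes "\<not> elementary G \<rho>" and X: "trace X = 0" "X \<noteq> 0" "det X \<le> 0"
  obtains S where "S \<in> psl_image G \<rho>" "conj_defect S X \<noteq> 0"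
proof -
  obtain a b where ab: "a \<in> boundary_points" "b \<in> boundary_points"
    and points: "\<And>v. eigenvector X v \<Longrightarrow> proj_point v \<in> {a, b}" and "\<exists>v. eigenvector X v"
    using traceless_eigenvector_points[OF X] by blast
  then obtain v0 where v0: "eigenvector X v0"
    by blast
  have "mob S a \<in> {a, b} \<or> mob S b \<in> {a, b}"
    if S: "S \<in> psl_image G \<rho>" "conj_defect S X = 0" for S
  proof -
    have dS: "det S = 1"
      using det_psl_image[OF S(1)] .
    obtain v where v: "eigenvector X v" "eigenvector X (S *v v) \<or> eigenvector X (adjugate S *v v)"
      using conj_defect_zero_eigenvector[OF dS X(1) S(2) v0] by blast
    have "v \<noteq> 0"
      using v(1) by (simp add: eigenvector_def)
    have pv: "proj_point v \<in> {a, b}" "proj_point v \<in> boundary_points"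
      using points[OF v(1)] \<open>v \<noteq> 0\<close> by (auto simp: boundary_points_def)
    from v(2) show ?thesis
    proof
      assume "eigenvector X (S *v v)"
      then have "mob S (proj_point v) \<in> {a, b}"
        using points \<open>v \<noteq> 0\<close> by (simp add: mob_proj_point)
      then show ?thesis
        using pv(1) by auto
    next
      assume "eigenvector X (adjugate S *v v)"
      then have "mob (adjugate S) (proj_point v) \<in> {a, b}"
        using points \<open>v \<noteq> 0\<close> by (simp add: mob_proj_point)
      moreover have "mob S (mob (adjugate S) (proj_point v)) = proj_point v"
        using mob_adjugate_cancel(2)[OF dS pv(2)] .
      ultimately show ?thesis
        using pv(1) by auto
    qed
  qed
  then show thesis
    using elementary_if_pair_preserved[OF ab] assms(1) that by blast
qed

lemma finite_conj_defect_witnesses: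
  assumes "\<not> elementary G \<rho>"
  obtains D where "finite D" "D \<subseteq> psl_image G \<rho>"
    "\<And>X. trace X = 0 \<Longrightarrow> X \<noteq> 0 \<Longrightarrow> det X \<le> 0 \<Longrightarrow> \<exists>S\<in>D. conj_defect S X \<noteq> 0"
proof -
  define K where "K = {X :: real^2^2. trace X = 0 \<and> norm X = 1 \<and> det X \<le> 0}"
  have cover: "K \<subseteq> (\<Union>S\<in>psl_image G \<rho>. {X. conj_defect S X \<noteq> 0})"
  proof
    fix X
    assume "X \<in> K"
    then have "trace X = 0" "X \<noteq> 0" "det X \<le> 0"
      by (auto simp: K_def)
    then obtain S where "S \<in> psl_image G \<rho>" "conj_defect S X \<noteq> 0"
      by (rule conj_defect_nonzero[OF assms])
    then show "X \<in> (\<Union>S\<in>psl_image G \<rho>. {X. conj_defect S X \<noteq> 0})"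
      by blast
  qed
  have "open {X. conj_defect S X \<noteq> 0}" for S
    using open_Collect_neq[OF continuous_on_conj_defect continuous_on_const] by simp
  then obtain D where D: "D \<subseteq> psl_image G \<rho>" "finite D" "K \<subseteq> (\<Union>S\<in>D. {X. conj_defect S X \<noteq> 0})"
    by (rule compactE_image[OF compact_traceless_unit_sphere[folded K_def] _ cover])
  have "\<exists>S\<in>D. conj_defect S X \<noteq> 0" if X: "trace X = 0" "X \<noteq> 0" "det X \<le> 0" for X
  proof -
    have "(1 / norm X) *\<^sub>R X \<in> K"
      using X by (simp add: K_def trace_scaleR2 det_scaleR2 mult_nonneg_nonpos)
    then obtain S where "S \<in> D" "conj_defect S ((1 / norm X) *\<^sub>R X) \<noteq> 0"
      using D(3) by blast
    then show ?thesis
      by (auto simp: conj_defect_scaleR)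
  qed
  then show thesis
    using that D by blast
qed

end

section \<open>Elliptic elements near the identity\<close>

lemma trace_traceless_part: "trace (T - (trace T / 2) *\<^sub>R mat 1 :: real^2^2) = 0"
  by (simp add: trace_sub trace_scaleR2 trace_I)

lemma det_traceless_part: "det (T :: real^2^2) = 1 \<Longrightarrow> det (T - (trace T / 2) *\<^sub>R mat 1) = 1 - (trace T / 2)\<^sup>2"
  by (cases T rule: mat2_cases) (simp add: mat2_one power2_eq_square field_simps)

lemma hyperbolic_traceless_part:
  assumes "det T = 1" "\<not> abs_tr T < 2" "T \<noteq> mat 1" "T \<noteq> - mat 1"
  defines "X \<equiv> T - (trace T / 2) *\<^sub>R mat 1"
  shows "trace X = 0" "X \<noteq> 0" "det X \<le> 0"
proof -
  define c where "c = trace T / 2"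
  show "trace X = 0"
    using trace_traceless_part[of T] by (simp add: X_def)
  have "1 \<le> c\<^sup>2"
    using assms(2) abs_le_square_iff[of 2 "trace T"] by (simp add: abs_tr_eq_abs_trace power_divide c_def)
  then show "det X \<le> 0"
    using det_traceless_part[OF assms(1)] by (simp add: X_def c_def)
  show "X \<noteq> 0"
  proof
    assume "X = 0"
    then have Tc: "T = c *\<^sub>R mat 1"
      by (simp add: X_def c_def)
    then have "c\<^sup>2 = 1"
      using assms(1) by (simp add: det_scaleR2 det_I)
    then show False
      using assms(3,4) Tc by (auto simp: power2_eq_1_iff)
  qed
qed

lemma trace_products_conj_defect:
  assumes "det T = 1" "det S = 1"
  defines "T' \<equiv> S ** T ** adjugate S" and "X \<equiv> T - (trace T / 2) *\<^sub>R mat 1"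
  shows "(trace (T ** T') - 2) * (trace (T ** adjugate T') - 2) = - 4 * conj_defect S X"
proof -
  define c where "c = trace T / 2"
  define X' where "X' = S ** X ** adjugate S"
  have T: "T = c *\<^sub>R mat 1 + X"
    by (simp add: X_def c_def)
  have "T' = c *\<^sub>R mat 1 + X'"
    using assms(2) by (simp add: T'_def X'_def T matrix_add_ldistrib matrix_add_rdistrib
        matrix_scalar_ac scalar_matrix_assoc[symmetric] matrix_mul_adjugate)
  moreover have "trace X = 0" "trace X' = 0"
    using assms(2) trace_traceless_part[of T] by (simp_all add: X_def X'_def trace_conj)
  ultimately have x: "trace (T ** T') = 2 * c\<^sup>2 + trace (X ** X')"
    by (simp add: T matrix_add_ldistrib matrix_add_rdistrib matrix_scalar_ac
        scalar_matrix_assoc[symmetric] trace_add trace_scaleR2 trace_I power2_eq_square)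
  have y: "trace (T ** adjugate T') = 2 * c\<^sup>2 - trace (X ** X')"
    using \<open>trace X' = 0\<close> \<open>T' = c *\<^sub>R mat 1 + X'\<close> x
    by (simp add: trace_mult_adjugate trace_add trace_scaleR2 trace_I c_def power2_eq_square)
  have d: "det X = 1 - c\<^sup>2"
    using det_traceless_part[OF assms(1)] by (simp add: X_def c_def)
  show ?thesis
    unfolding x y conj_defect_def d X'_def[symmetric] by (simp add: power2_eq_square algebra_simps)
qed

lemma elliptic_product_near_one:
  assumes "det T = 1" "det T' = 1" "trace T' = trace T"
    and nondeg: "(trace (T ** T') - 2) * (trace (T ** adjugate T') - 2) \<noteq> 0"
    and near: "max_entry (T - mat 1) \<le> \<delta>" "max_entry (T' - mat 1) \<le> \<delta>" "\<delta> \<le> 1/132"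
  obtains B where "B \<in> {T ** T', T ** adjugate T', T ** T' ** adjugate T ** adjugate T'}"
    "abs_tr B < 2" "max_entry (B - mat 1) \<le> 66 * \<delta>"
proof -
  note result = that
  have "0 \<le> \<delta>"
    using near(1) max_entry_nonneg order_trans by blast
  have adj: "max_entry (adjugate T - mat 1) \<le> \<delta>" "max_entry (adjugate T' - mat 1) \<le> \<delta>"
    using near by (simp_all add: max_entry_adjugate_diff_one)
  have P1: "max_entry (T ** T' - mat 1) \<le> 66 * \<delta>"
    and P2: "max_entry (T ** adjugate T' - mat 1) \<le> 66 * \<delta>"
    using max_entry_mult_near_one[OF near(1) near(2)] max_entry_mult_near_one[OF near(1) adj(2)]
      near(3) \<open>0 \<le> \<delta>\<close> by auto
  have "max_entry (T ** T' ** adjugate T - mat 1) \<le> 3 * (6 * \<delta> + \<delta>)"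
    using max_entry_mult_near_one[OF max_entry_mult_near_one[OF near(1) near(2)] adj(1)] near(3) by simp
  then have P3: "max_entry (T ** T' ** adjugate T ** adjugate T' - mat 1) \<le> 66 * \<delta>"
    using max_entry_mult_near_one[OF _ adj(2), of "T ** T' ** adjugate T" "3 * (6 * \<delta> + \<delta>)"] near(3) by simp
  have traces: "1 \<le> trace (T ** T')" "1 \<le> trace (T ** adjugate T')"
      "1 \<le> trace (T ** T' ** adjugate T ** adjugate T')"
    using P1 P2 P3 near(3) by (simp_all add: trace_ge_one_near_one)
  consider "trace (T ** T') < 2" | "trace (T ** adjugate T') < 2"
    | "trace (T ** T' ** adjugate T ** adjugate T') < 2"
  proof (cases "trace (T ** T') < 2 \<or> trace (T ** adjugate T') < 2")
    case False
    then have "0 < (trace (T ** T') - 2) * (trace (T ** adjugate T') - 2)"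
      using nondeg by (simp add: not_less zero_less_mult_iff less_eq_real_def)
    then show thesis
      using that(3) trace_commutator_of_equal_traces[OF assms(1-3)] by simp
  qed (use that in blast)
  then show thesis
  proof cases
    case 1
    then show thesis
      using result[of "T ** T'"] P1 traces(1) by (simp add: abs_tr_eq_abs_trace)
  next
    case 2
    then show thesis
      using result[of "T ** adjugate T'"] P2 traces(2) by (simp add: abs_tr_eq_abs_trace)
  next
    case 3
    then show thesis
      using result[of "T ** T' ** adjugate T ** adjugate T'"] P3 traces(3) by (simp add: abs_tr_eq_abs_trace)
  qed
qed

context psl_rep
begin

lemma exists_near_one:
  assumes "\<not> discrete_rep G \<rho>" "e > 0"
  obtains T where "T \<in> psl_image G \<rho>" "T \<noteq> mat 1" "T \<noteq> - mat 1" "max_entry (T - mat 1) \<le> e"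
proof -
  obtain A where A: "A \<in> psl_image G \<rho>"
    and acc: "\<And>d. d > 0 \<Longrightarrow> \<exists>B\<in>psl_image G \<rho>. dist B A < d \<and> B \<noteq> A"
    using assms(1) unfolding discrete_rep_def discrete_set_def by (metis (full_types))
  define e1 where "e1 = min e (1/2)"
  define d where "d = e1 / (2 * (max_entry A + 1))"
  have "d > 0"
    using assms(2) max_entry_nonneg[of A] by (simp add: d_def e1_def)
  then obtain B where B: "B \<in> psl_image G \<rho>" "dist B A < d" "B \<noteq> A"
    using acc by blast
  define T where "T = adjugate A ** B"
  have dA: "det A = 1"
    using det_psl_image[OF A] .
  have "T - mat 1 = adjugate A ** (B - A)"
    using dA by (simp add: T_def adjugate_matrix_mul matrix_diff_ldistrib)
  then have "max_entry (T - mat 1) \<le> 2 * max_entry A * max_entry (B - A)"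
    using max_entry_mult[of "adjugate A" "B - A"] by (simp add: max_entry_adjugate)
  also have "\<dots> \<le> 2 * (max_entry A + 1) * d"
    using max_entry_le_norm[of "B - A"] B(2) max_entry_nonneg[of A] max_entry_nonneg[of "B - A"]
    by (intro mult_mono) (auto simp: dist_norm)
  also have "\<dots> = e1"
    using max_entry_nonneg[of A] by (simp add: d_def)
  finally have T_near: "max_entry (T - mat 1) \<le> e1" .
  show thesis
  proof (rule that)
    show "T \<in> psl_image G \<rho>"
      unfolding T_def using A B(1) by (intro psl_image_mult psl_image_adjugate)
    show "T \<noteq> mat 1"
    proof
      assume "T = mat 1"
      then have "A ** T = A"
        by simp
      then show False
        using B(3) dA by (simp add: T_def matrix_mul_adjugate matrix_mul_assoc)
    qed
    show "T \<noteq> - mat 1"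
      using T_near by (auto simp: e1_def mat2_one max_entry_mat2)
    show "max_entry (T - mat 1) \<le> e"
      using T_near by (simp add: e1_def)
  qed
qed

lemma elliptic_near_one:
  assumes nel: "\<not> elementary G \<rho>" and nd: "\<not> discrete_rep G \<rho>" and "\<eta> > 0"
  shows "\<exists>B\<in>psl_image G \<rho>. abs_tr B < 2 \<and> max_entry (B - mat 1) \<le> \<eta>"
proof -
  obtain D where D: "finite D" "D \<subseteq> psl_image G \<rho>"
    "\<And>X. trace X = 0 \<Longrightarrow> X \<noteq> 0 \<Longrightarrow> det X \<le> 0 \<Longrightarrow> \<exists>S\<in>D. conj_defect S X \<noteq> 0"
    using finite_conj_defect_witnesses[OF nel] by blast
  define C where "C = Max (insert 1 (max_entry ` D))"
  have C: "1 \<le> C" "\<And>S. S \<in> D \<Longrightarrow> max_entry S \<le> C"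
    using D(1) by (simp_all add: C_def)
  define \<delta> where "\<delta> = min \<eta> (1/2) / 66"
  have \<delta>: "0 < \<delta>" "\<delta> \<le> 1/132" "66 * \<delta> \<le> \<eta>"
    using \<open>\<eta> > 0\<close> by (auto simp: \<delta>_def)
  have C2: "1 \<le> 4 * C\<^sup>2"
    using C(1) one_le_power[of C 2] by linarith
  obtain T where T: "T \<in> psl_image G \<rho>" "T \<noteq> mat 1" "T \<noteq> - mat 1"
    "max_entry (T - mat 1) \<le> \<delta> / (4 * C\<^sup>2)"
    using exists_near_one[OF nd, of "\<delta> / (4 * C\<^sup>2)"] \<delta>(1) C(1) by force
  have "\<delta> / (4 * C\<^sup>2) \<le> \<delta> / 1"
    using \<delta>(1) C2 by (intro divide_left_mono) auto
  then have T_near: "max_entry (T - mat 1) \<le> \<delta>"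
    using T(4) by simp
  have dT: "det T = 1"
    using det_psl_image[OF T(1)] .
  \<comment> \<open>if \<open>T\<close> is not elliptic, one of \<open>T T'\<close>, \<open>T T'\<^sup>-\<^sup>1\<close>, \<open>[T, T']\<close> is, for \<open>T' = S T S\<^sup>-\<^sup>1\<close>
    with \<open>S \<in> D\<close>; as \<open>D\<close> is finite, \<open>T\<close> was chosen so close to the identity that \<open>T'\<close> is close too\<close>
  show ?thesis
  proof (cases "abs_tr T < 2")
    case True
    then show ?thesis
      using T(1) T_near \<delta>(3) \<delta>(1) by (intro bexI[of _ T]) auto
  next
    case False
    define X where "X = T - (trace T / 2) *\<^sub>R mat 1"
    obtain S where S: "S \<in> D" "conj_defect S X \<noteq> 0"
      using D(3)[OF hyperbolic_traceless_part[OF dT False T(2,3)]] unfolding X_def by blast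
    then have dS: "det S = 1" and S_img: "S \<in> psl_image G \<rho>"
      using D(2) det_psl_image by auto
    define T' where "T' = S ** T ** adjugate S"
    have T': "det T' = 1" "trace T' = trace T" "T' \<in> psl_image G \<rho>"
      using dT dS T(1) S_img
      by (simp_all add: T'_def det_mul trace_conj psl_image_mult psl_image_adjugate)
    have "4 * C\<^sup>2 * max_entry (T - mat 1) \<le> 4 * C\<^sup>2 * (\<delta> / (4 * C\<^sup>2))"
      using T(4) by (intro mult_left_mono) auto
    then have "max_entry (T' - mat 1) \<le> 4 * C\<^sup>2 * (\<delta> / (4 * C\<^sup>2))"
      using max_entry_conj_near_one[OF dS C(2)[OF S(1)], of T] by (simp add: T'_def)
    then have T'_near: "max_entry (T' - mat 1) \<le> \<delta>"
      using C(1) by simp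
    have "(trace (T ** T') - 2) * (trace (T ** adjugate T') - 2) \<noteq> 0"
      using trace_products_conj_defect[OF dT dS] S(2) by (simp add: T'_def X_def)
    then obtain B where "B \<in> {T ** T', T ** adjugate T', T ** T' ** adjugate T ** adjugate T'}"
      "abs_tr B < 2" "max_entry (B - mat 1) \<le> 66 * \<delta>"
      using elliptic_product_near_one[OF dT T'(1,2) _ T_near T'_near \<delta>(2)] by blast
    moreover have "{T ** T', T ** adjugate T', T ** T' ** adjugate T ** adjugate T'} \<subseteq> psl_image G \<rho>"
      using T(1) T'(3) by (simp add: psl_image_mult psl_image_adjugate)
    ultimately show ?thesis
      using \<delta>(3) by auto
  qed
qed

end

theorem mainTheorem2:
  fixes G :: "('g, 'z) monoid_scheme"
    and \<rho>1 \<rho>2 :: "'g \<Rightarrow> real^2^2"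
  assumes "group G"
    and "psl_hom G \<rho>1" and "psl_hom G \<rho>2"
    and "\<not> elementary G \<rho>1"
    and "\<not> discrete_rep G \<rho>1"
    and "\<forall>\<gamma>\<in>carrier G. rot (\<rho>1 \<gamma>) = rot (\<rho>2 \<gamma>)"
  shows "\<forall>\<gamma>\<in>carrier G. abs_tr (\<rho>1 \<gamma>) = abs_tr (\<rho>2 \<gamma>)"
proof
  interpret rot_equal_reps G \<rho>1 \<rho>2
    using assms(1-3,6) by (simp add: rot_equal_reps_def rot_equal_reps_axioms_def psl_rep_def psl_rep_axioms_def)
  fix \<gamma>
  assume "\<gamma> \<in> carrier G"
  then show "abs_tr (\<rho>1 \<gamma>) = abs_tr (\<rho>2 \<gamma>)"
    using abs_tr_eq_if_elliptic_near_identity \<rho>1.elliptic_near_one[OF assms(4,5)] by metis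
qed

end
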